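(* Let $Y\in\mathbb R^{m\times n}$ ($m,n\ge1$). (a) $Y\in\operatorname{Sing}^\times_{m,n}$ if and only if for every $\varepsilon>0$ there exists $t_0>0$ such that for every $t\ge t_0$ there is $a\in C_0(t)$ with $\delta(\exp(a)x_Y)<\varepsilon$ (equivalently, $(tE_1).x_Y\cap\{x\in X:\delta(x)<\varepsilon\}\ne\emptyset$). (b) $Y\in\operatorname{WA}^\times_{m,n}$ if and only if for every $\varepsilon>0$ the set of $t\ge0$ for which there is $a\in C_0(t)$ with $\delta(\exp(a)x_Y)<\varepsilon$ is unbounded; equivalently, the orbit $\{\exp(a)x_Y:a\in E\}$ is unbounded (not relatively compact) in $X$.
   Context: $G=\operatorname{SL}_{m+n}(\mathbb R)$, $X=G/\operatorname{SL}_{m+n}(\mathbb Z)$ identified with unimodular lattices in $\mathbb R^{m+n}$; $\mathfrak a=\{\operatorname{diag}(a_1,\dots,a_{m+n}):\sum a_i=0\}$, acting by $a.x=\exp(a)x$. $\delta(x):=\min\{\|\boldsymbol v\|_\infty:\boldsymbol v\in x\setminus\{0\}\}$; $x_Y:=\begin{pmatrix}I_m&Y\\0&I_n\end{pmatrix}\mathbb Z^{m+n}$. $E:=\{a\in\mathfrak a:a_1,\dots,a_m>0,\ a_{m+1},\dots,a_{m+n}<0\}$; $C_0(t):=\{a\in E:a_1+\dots+a_m=t\}$; $E_1:=C_0(1)$. With $Y_i$ the rows of $Y$ and $\Pi_+(\boldsymbol q)=\prod_j\max\{1,|q_j|\}$, for $\psi:(1,\infty)\to(0,\infty)$ and $T>1$,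 $\mathcal S^\times_{m,n}(\psi,T)$ is the set of $Y$ admitting $\boldsymbol p\in\mathbb Z^m$, $\boldsymbol q\in\mathbb Z^n\setminus\{0\}$ with $\prod_i|Y_i\boldsymbol q-p_i|<\psi(T)$, $\Pi_+(\boldsymbol q)<T$; $\operatorname{D}^\times_{m,n}(\psi):=\bigcup_{T_0>1}\bigcap_{T\ge T_0}\mathcal S^\times_{m,n}(\psi,T)$, $\operatorname{W}^\times_{m,n}(\psi):=\limsup_{T\to\infty}\mathcal S^\times_{m,n}(\psi,T)$ (the set of $Y$ lying in $\mathcal S^\times_{m,n}(\psi,T)$ for an unbounded set of $T$); $\psi_1(x)=1/x$; $\operatorname{Sing}^\times_{m,n}:=\bigcap_{c>0}\operatorname{D}^\times_{m,n}(c\psi_1)$, $\operatorname{WA}^\times_{m,n}:=\bigcap_{c>0}\operatorname{W}^\times_{m,n}(c\psi_1)$. *)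

theory Defs
  imports "HOL-Analysis.Analysis"
begin

text \<open>Coordinates of R^(m+n) are indexed by the sum type 'm::finite + 'n::finite:
  Inl i (i = 1..m) and Inr j (j = 1..n). A matrix Y in R^(m x n) is real^'n::finite^'m::finite.\<close>

definition lattice_xY :: "real^'n::finite^'m::finite \<Rightarrow> (real^('m::finite + 'n::finite)) set" where
  "lattice_xY Y = {v. \<exists>(p::'m \<Rightarrow> int) (q::'n \<Rightarrow> int).
      v = (\<chi> k. case k of Inl i \<Rightarrow> of_int (p i) + (\<Sum>j\<in>UNIV. Y $ i $ j * of_int (q j))
                         | Inr j \<Rightarrow> of_int (q j))}"

definition exp_act :: "real^'k::finite \<Rightarrow> real^'k::finite \<Rightarrow> real^'k::finite" where
  "exp_act a v = (\<chi> k. exp (a $ k) * v $ k)"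

definition supnorm :: "real^'k::finite \<Rightarrow> real" where
  "supnorm v = Max (range (\<lambda>k. \<bar>v $ k\<bar>))"

definition delta :: "(real^'k::finite) set \<Rightarrow> real" where
  "delta L = Inf {supnorm v | v. v \<in> L \<and> v \<noteq> 0}"

definition frak_a :: "(real^('m::finite + 'n::finite)) set" where
  "frak_a = {a. (\<Sum>k\<in>UNIV. a $ k) = 0}"

definition E_cone :: "(real^('m::finite + 'n::finite)) set" where
  "E_cone = {a \<in> frak_a. (\<forall>i. a $ Inl i > 0) \<and> (\<forall>j. a $ Inr j < 0)}"

definition C0 :: "real \<Rightarrow> (real^('m::finite + 'n::finite)) set" where
  "C0 t = {a \<in> E_cone. (\<Sum>i\<in>UNIV. a $ Inl i) = t}"

definition S_times :: "(real \<Rightarrow> real) \<Rightarrow> real \<Rightarrow> (real^'n::finite^'m::finite) set" where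
  "S_times psi T = {Y. \<exists>(p::'m \<Rightarrow> int) (q::'n \<Rightarrow> int). q \<noteq> (\<lambda>_. 0) \<and>
      (\<Prod>i\<in>UNIV. \<bar>(\<Sum>j\<in>UNIV. Y $ i $ j * of_int (q j)) - of_int (p i)\<bar>) < psi T \<and>
      (\<Prod>j\<in>UNIV. max 1 \<bar>real_of_int (q j)\<bar>) < T}"

definition D_times :: "(real \<Rightarrow> real) \<Rightarrow> (real^'n::finite^'m::finite) set" where
  "D_times psi = (\<Union>T0\<in>{1<..}. \<Inter>T\<in>{T0..}. S_times psi T)"

definition W_times :: "(real \<Rightarrow> real) \<Rightarrow> (real^'n::finite^'m::finite) set" where
  "W_times psi = {Y. \<forall>R. \<exists>T\<ge>R. T > 1 \<and> Y \<in> S_times psi T}"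

definition psi1 :: "real \<Rightarrow> real" where
  "psi1 x = 1 / x"

definition Sing_times :: "(real^'n::finite^'m::finite) set" where
  "Sing_times = (\<Inter>c\<in>{0<..}. D_times (\<lambda>x. c * psi1 x))"

definition WA_times :: "(real^'n::finite^'m::finite) set" where
  "WA_times = (\<Inter>c\<in>{0<..}. W_times (\<lambda>x. c * psi1 x))"

definition int_vectors :: "(real^'k::finite) set" where
  "int_vectors = {z. \<forall>k. z $ k \<in> \<int>}"

definition lattice_of :: "real^'k::finite^'k \<Rightarrow> (real^'k::finite) set" where
  "lattice_of g = (\<lambda>z. g *v z) ` int_vectors"

text \<open>A set of unimodular lattices is relatively compact in X = SL(R)/SL(Z)
  (quotient topology) iff it is contained in pi(K) for a compact K in SL(R).\<close>
definition rel_compact_in_X :: "(real^'k::finite) set set \<Rightarrow> bool" where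
  "rel_compact_in_X S \<longleftrightarrow> (\<exists>K. compact K \<and> (\<forall>g\<in>K. det g = 1) \<and>
      (\<forall>L\<in>S. \<exists>g\<in>K. lattice_of g = L))"

end

theory Submission
  imports Defs
begin

(* A vector exp(a)(Yq + p, q) of sup norm below e with a in C0(t) is, after multiplying out the
   coordinates, a multiplicative approximation prod |Y_i q - p_i| < e^m exp(-t) with
   Pi_+(q) < exp t. Conversely, an approximation can be turned into such a vector once every
   individual error |Y_i q - p_i| is small, and a Dirichlet step achieves this at the cost of
   bounded factors. Matching T with exp t therefore gives (a) and the first half of (b).
   For the second half, Mahler's criterion identifies relatively compact sets of unimodular
   lattices with those whose shortest vectors are bounded below; it is proved with a reduced
   basis (Gram-Schmidt heights h_i <= 2 h_(i+1) with product 1 and h_0 at least the shortest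
   length, hence all bounded) followed by size reduction. Along C0(t) with t bounded the shortest
   vector of exp(a) x_Y is automatically bounded below, so the orbit is unbounded exactly when
   short vectors occur for arbitrarily large t. *)

section \<open>The lattice \<open>x\<^sub>Y\<close> and the diagonal flow\<close>

lemma sum_UNIV_Plus:
  "(\<Sum>k\<in>(UNIV::('m::finite + 'n::finite) set). f k) = (\<Sum>i\<in>UNIV. f (Inl i)) + (\<Sum>j\<in>UNIV. f (Inr j))"
  using sum.Plus[of "UNIV::'m set" "UNIV::'n set" f] by (simp add: UNIV_Plus_UNIV comp_def)

lemma supnorm_less_iff: "supnorm (v::real^'k::finite) < e \<longleftrightarrow> (\<forall>k. \<bar>v $ k\<bar> < e)"
  unfolding supnorm_def by (subst Max_less_iff) auto

lemma abs_nth_le_supnorm: "\<bar>(v::real^'k::finite) $ k\<bar> \<le> supnorm v"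
  unfolding supnorm_def by (rule Max_ge) auto

lemma supnorm_nonneg: "0 \<le> supnorm (v::real^'k::finite)"
  using abs_nth_le_supnorm[of v] abs_ge_zero order_trans by blast

lemma supnorm_le_norm: "supnorm (v::real^'k::finite) \<le> norm v"
proof -
  have "supnorm v \<in> range (\<lambda>k. \<bar>v $ k\<bar>)" unfolding supnorm_def by (rule Max_in) auto
  then obtain k where "supnorm v = \<bar>v $ k\<bar>" by auto
  then show ?thesis using component_le_norm_cart[of v k] by simp
qed

lemma norm_le_card_supnorm: "norm (v::real^'k::finite) \<le> real CARD('k) * supnorm v"
proof -
  have "norm v \<le> (\<Sum>k\<in>UNIV. \<bar>v $ k\<bar>)" by (rule norm_le_l1_cart)
  also have "\<dots> \<le> (\<Sum>k\<in>(UNIV::'k set). supnorm v)" by (intro sum_mono abs_nth_le_supnorm)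
  finally show ?thesis by simp
qed

lemma delta_le_supnorm: "v \<in> L \<Longrightarrow> v \<noteq> 0 \<Longrightarrow> delta L \<le> supnorm (v::real^'k::finite)"
  unfolding delta_def by (rule cInf_lower) (auto intro!: bdd_belowI[where m=0] simp: supnorm_nonneg)

lemma delta_lessE:
  fixes L :: "(real^'k::finite) set"
  assumes "delta L < e" "\<exists>v\<in>L. v \<noteq> 0"
  obtains v where "v \<in> L" "v \<noteq> 0" "supnorm v < e"
proof -
  let ?N = "{supnorm v |v. v \<in> L \<and> v \<noteq> 0}"
  have ne: "?N \<noteq> {}" using assms(2) by auto
  have bdd: "bdd_below ?N" by (auto intro!: bdd_belowI[where m=0] simp: supnorm_nonneg)
  obtain x where "x \<in> ?N" "x < e"
    using assms(1) cInf_less_iff[OF ne bdd, of e] unfolding delta_def by blast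
  then show ?thesis using that by auto
qed

lemma delta_greatest:
  fixes L :: "(real^'k::finite) set"
  assumes "\<And>v. v \<in> L \<Longrightarrow> v \<noteq> 0 \<Longrightarrow> c \<le> supnorm v" "\<exists>v\<in>L. v \<noteq> 0"
  shows "c \<le> delta L"
  unfolding delta_def using assms by (intro cInf_greatest) auto

definition xY_point :: "real^'n::finite^'m::finite \<Rightarrow> ('m \<Rightarrow> int) \<Rightarrow> ('n \<Rightarrow> int) \<Rightarrow> real^('m + 'n)"
  where "xY_point Y p q = (\<chi> k. case k of Inl i \<Rightarrow> of_int (p i) + (\<Sum>j\<in>UNIV. Y $ i $ j * of_int (q j))
                                       | Inr j \<Rightarrow> of_int (q j))"

lemma mem_lattice_xY_iff: "v \<in> lattice_xY Y \<longleftrightarrow> (\<exists>p q. v = xY_point Y p q)"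
  unfolding lattice_xY_def xY_point_def by auto

lemma xY_point_Inl [simp]:
  "xY_point Y p q $ Inl i = of_int (p i) + (\<Sum>j\<in>UNIV. Y $ i $ j * of_int (q j))"
  by (simp add: xY_point_def)

lemma xY_point_Inr [simp]: "xY_point Y p q $ Inr j = of_int (q j)"
  by (simp add: xY_point_def)

lemma exp_act_nth [simp]: "exp_act a v $ k = exp (a $ k) * v $ k"
  by (simp add: exp_act_def)

lemma exp_act_lattice_xY_nonzero:
  fixes Y :: "real^'n::finite^'m::finite" and a :: "real^('m + 'n)"
  shows "\<exists>v\<in>exp_act a ` lattice_xY Y. v \<noteq> 0"
proof
  let ?v = "exp_act a (xY_point Y (\<lambda>_. 1) (\<lambda>_. 0))"
  show "?v \<in> exp_act a ` lattice_xY Y" using mem_lattice_xY_iff by blast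
  have "?v $ Inl undefined \<noteq> 0" by simp
  then show "?v \<noteq> 0" by (metis zero_index)
qed

lemma lattice_xY_nonzero_coordinate:
  assumes "w \<in> lattice_xY Y" "w \<noteq> 0"
  obtains k where "1 \<le> \<bar>w $ k\<bar>"
proof -
  obtain p q where w: "w = xY_point Y p q" using assms(1) mem_lattice_xY_iff by blast
  obtain k where k: "w $ k \<noteq> 0" using assms(2) by (metis vec_eq_iff zero_index)
  show ?thesis
  proof (cases "\<exists>j. q j \<noteq> 0")
    case True
    then obtain j where "q j \<noteq> 0" by blast
    then have "1 \<le> \<bar>w $ Inr j\<bar>" unfolding w by simp
    then show ?thesis by (rule that)
  next
    case False
    then have q0: "q = (\<lambda>_. 0)" by auto
    then obtain i where i: "k = Inl i" using k unfolding w by (cases k) auto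
    then have "1 \<le> \<bar>w $ Inl i\<bar>" using k q0 unfolding w by simp
    then show ?thesis by (rule that)
  qed
qed

lemma C0_D:
  fixes a :: "real^('m::finite + 'n::finite)"
  assumes "a \<in> C0 t"
  shows "\<And>i. a $ Inl i > 0" "\<And>j. a $ Inr j < 0" "(\<Sum>i\<in>UNIV. a $ Inl i) = t"
    "(\<Sum>j\<in>UNIV. a $ Inr j) = - t"
proof -
  show "\<And>i. a $ Inl i > 0" "\<And>j. a $ Inr j < 0" "(\<Sum>i\<in>UNIV. a $ Inl i) = t"
    using assms by (auto simp: C0_def E_cone_def)
  have "(\<Sum>k\<in>UNIV. a $ k) = 0" using assms by (auto simp: C0_def E_cone_def frak_a_def)
  then show "(\<Sum>j\<in>UNIV. a $ Inr j) = - t"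
    using assms by (auto simp: C0_def sum_UNIV_Plus)
qed

lemma C0_I:
  fixes a :: "real^('m::finite + 'n::finite)"
  assumes "\<And>i. a $ Inl i > 0" "\<And>j. a $ Inr j < 0" "(\<Sum>i\<in>UNIV. a $ Inl i) = t"
    "(\<Sum>j\<in>UNIV. a $ Inr j) = - t"
  shows "a \<in> C0 t"
  using assms by (simp add: C0_def E_cone_def frak_a_def sum_UNIV_Plus)

section \<open>Short vectors in the orbit and multiplicative approximations\<close>

abbreviation approx_error :: "real^'n::finite^'m::finite \<Rightarrow> ('m \<Rightarrow> int) \<Rightarrow> ('n \<Rightarrow> int) \<Rightarrow> 'm \<Rightarrow> real"
  where "approx_error Y p q i \<equiv> \<bar>(\<Sum>j\<in>UNIV. Y $ i $ j * of_int (q j)) - of_int (p i)\<bar>"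

abbreviation Pi_plus :: "('n::finite \<Rightarrow> int) \<Rightarrow> real"
  where "Pi_plus q \<equiv> \<Prod>j\<in>UNIV. max 1 \<bar>real_of_int (q j)\<bar>"

lemma short_orbit_vector_has_nonzero_q:
  fixes a :: "real^('m::finite + 'n::finite)"
  assumes "a \<in> C0 t" "supnorm (exp_act a (xY_point Y p q)) < 1" "xY_point Y p q \<noteq> 0"
  shows "q \<noteq> (\<lambda>_. 0)"
proof
  assume q0: "q = (\<lambda>_. 0)"
  obtain k where k: "xY_point Y p q $ k \<noteq> 0" using assms(3) by (metis vec_eq_iff zero_index)
  then obtain i where i: "k = Inl i" using q0 by (cases k) auto
  then have "1 \<le> \<bar>real_of_int (p i)\<bar>" using k q0 by simp
  then have "exp (a $ Inl i) \<le> exp (a $ Inl i) * \<bar>real_of_int (p i)\<bar>" by simp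
  moreover have "1 < exp (a $ Inl i)" using C0_D(1)[OF assms(1)] by simp
  ultimately have "1 < exp (a $ Inl i) * \<bar>real_of_int (p i)\<bar>" by linarith
  moreover have "\<bar>exp_act a (xY_point Y p q) $ Inl i\<bar> < 1"
    using assms(2) unfolding supnorm_less_iff by blast
  ultimately show False using q0 by (simp add: abs_mult)
qed

lemma prod_UNIV_strict_mono:
  fixes f g :: "'a::finite \<Rightarrow> real"
  assumes "\<And>i. 0 \<le> f i" "\<And>i. f i < g i"
  shows "(\<Prod>i\<in>UNIV. f i) < (\<Prod>i\<in>UNIV. g i)"
proof (rule prod_mono_strict[where i=undefined])
  show "0 < g i" for i using assms[of i] by linarith
qed (use assms in \<open>auto intro: less_imp_le\<close>)

lemma approximation_of_short_orbit_vector: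
  fixes Y :: "real^'n::finite^'m::finite" and a :: "real^('m + 'n)"
  assumes a: "a \<in> C0 t" and e: "0 < e" "e \<le> 1" and d: "delta (exp_act a ` lattice_xY Y) < e"
  obtains p q where "q \<noteq> (\<lambda>_. 0)" "(\<Prod>i\<in>UNIV. approx_error Y p q i) * exp t < e ^ CARD('m)"
    "Pi_plus q < exp t"
proof -
  obtain v where v: "v \<in> exp_act a ` lattice_xY Y" "v \<noteq> 0" "supnorm v < e"
    using d exp_act_lattice_xY_nonzero by (rule delta_lessE)
  then obtain p q where vpq: "v = exp_act a (xY_point Y p q)" by (force simp: mem_lattice_xY_iff)
  have small: "exp (a $ k) * \<bar>xY_point Y p q $ k\<bar> < e" for k
    using v(3) unfolding supnorm_less_iff vpq by (simp add: abs_mult)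
  have "supnorm (exp_act a (xY_point Y p q)) < 1" using v(3) vpq e by simp
  moreover have "xY_point Y p q \<noteq> 0" using v(2) vpq by (auto simp: exp_act_def vec_eq_iff)
  ultimately have q: "q \<noteq> (\<lambda>_. 0)" by (rule short_orbit_vector_has_nonzero_q[OF a])
  have "(\<Prod>i\<in>UNIV. approx_error Y (- p) q i) * exp t
        = (\<Prod>i\<in>UNIV. exp (a $ Inl i) * \<bar>xY_point Y p q $ Inl i\<bar>)"
    using C0_D(3)[OF a] by (simp add: prod.distrib exp_sum[symmetric] mult.commute add.commute)
  also have "\<dots> < (\<Prod>i\<in>(UNIV::'m set). e)"
    using small by (intro prod_UNIV_strict_mono) (auto simp del: xY_point_Inl)
  finally have err: "(\<Prod>i\<in>UNIV. approx_error Y (- p) q i) * exp t < e ^ CARD('m)" by simp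
  have "max 1 \<bar>real_of_int (q j)\<bar> < exp (- a $ Inr j)" for j
  proof -
    have "\<bar>real_of_int (q j)\<bar> < e * exp (- a $ Inr j)"
      using small[of "Inr j"] by (simp add: exp_minus field_simps)
    also have "\<dots> \<le> exp (- a $ Inr j)" using e by simp
    finally show ?thesis using C0_D(2)[OF a, of j] by simp
  qed
  then have "Pi_plus q < (\<Prod>j\<in>(UNIV::'n set). exp (- a $ Inr j))"
    by (intro prod_UNIV_strict_mono) auto
  also have "\<dots> = exp t" using C0_D(4)[OF a] by (simp add: exp_sum[symmetric] sum_negf)
  finally show ?thesis using that q err by blast
qed

lemma prod_interpolate:
  fixes f :: "'a::finite \<Rightarrow> real"
  assumes "\<And>i. 0 \<le> f i" "\<And>i. f i < e" "(\<Prod>i\<in>UNIV. f i) < P" "P < e ^ CARD('a)"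
  obtains g where "\<And>i. f i < g i" "\<And>i. g i < e" "(\<Prod>i\<in>UNIV. g i) = P"
proof -
  define \<phi> where "\<phi> s = (\<Prod>i\<in>UNIV. f i + s * (e - f i))" for s
  have "\<phi> 0 < P" "P < \<phi> 1" using assms(3,4) unfolding \<phi>_def by simp_all
  moreover have "continuous_on {0..1} \<phi>" unfolding \<phi>_def by (intro continuous_intros)
  ultimately obtain s where s: "0 \<le> s" "s \<le> 1" "\<phi> s = P"
    using IVT'[of \<phi> 0 P 1] by auto
  with \<open>\<phi> 0 < P\<close> \<open>P < \<phi> 1\<close> have "0 < s" "s < 1" by (auto simp: order.order_iff_strict)
  define g where "g i = f i + s * (e - f i)" for i
  have "f i < g i" "g i < e" for i
  proof -
    have "0 < e - f i" using assms(2)[of i] by simp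
    then have "0 < s * (e - f i)" "s * (e - f i) < e - f i"
      using \<open>0 < s\<close> \<open>s < 1\<close> mult_strict_right_mono[of s 1 "e - f i"] by auto
    then show "f i < g i" "g i < e" unfolding g_def by linarith+
  qed
  moreover have "(\<Prod>i\<in>UNIV. g i) = P" using s(3) unfolding \<phi>_def g_def .
  ultimately show ?thesis using that by blast
qed

text \<open>The exponents are \<open>exp(a\<^sub>i) = e / g\<^sub>i\<close>, where \<open>g\<^sub>i\<close> lies slightly above the \<open>i\<close>-th error and
  \<open>\<Prod> g\<^sub>i = e\<^sup>m exp(-t)\<close>, and \<open>exp(a\<^sub>m\<^sub>+\<^sub>j) = e exp(-u) / max 1 |q\<^sub>j|\<close>, where \<open>u > 0\<close>
  absorbs the slack in \<open>\<Pi>\<^sub>+(q) < e\<^sup>n exp t\<close>.\<close>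

lemma C0_point_of_approximation:
  fixes Y :: "real^'n::finite^'m::finite" and p :: "'m \<Rightarrow> int" and q :: "'n \<Rightarrow> int"
  assumes e: "0 < e" "e \<le> 1" and t: "0 < t"
    and err: "\<And>i. approx_error Y p q i < e"
    and height: "Pi_plus q < e ^ CARD('n) * exp t"
    and prod_err: "(\<Prod>i\<in>UNIV. approx_error Y p q i) * exp t < e ^ CARD('m)"
  obtains a where "a \<in> (C0 t :: (real^('m + 'n)) set)" "\<And>i. exp (a $ Inl i) * approx_error Y p q i < e"
    "\<And>j. exp (a $ Inr j) * max 1 \<bar>real_of_int (q j)\<bar> < e"
proof -
  let ?f = "approx_error Y p q" and ?m = "CARD('m)" and ?n = "real CARD('n)"
  have "(\<Prod>i\<in>UNIV. ?f i) < e ^ ?m * exp (- t)" using prod_err by (simp add: exp_minus field_simps)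
  moreover have "e ^ ?m * exp (- t) < e ^ ?m" using e t by simp
  ultimately obtain g where fg: "\<And>i. ?f i < g i" and ge: "\<And>i. g i < e"
    and prod_g: "(\<Prod>i\<in>UNIV. g i) = e ^ ?m * exp (- t)"
    using prod_interpolate[of ?f e] err by auto
  have g0: "0 < g i" for i using fg[of i] by (meson abs_ge_zero le_less_trans)
  have Q0: "0 < Pi_plus q" by (intro prod_pos) auto
  define u where "u = (t - ln (Pi_plus q) + ?n * ln e) / ?n"
  have "ln (Pi_plus q) < ln (e ^ CARD('n) * exp t)" using height Q0 e by simp
  then have "ln (Pi_plus q) < ?n * ln e + t" using e by (simp add: ln_mult ln_realpow)
  then have u0: "0 < u" unfolding u_def by simp
  define a :: "real^('m + 'n)" where
    "a = (\<chi> k. case k of Inl i \<Rightarrow> ln (e / g i)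
                       | Inr j \<Rightarrow> - (ln (max 1 \<bar>real_of_int (q j)\<bar>) - ln e + u))"
  have aL: "a $ Inl i = ln e - ln (g i)" for i unfolding a_def using g0[of i] e by (simp add: ln_div)
  have aR: "a $ Inr j = - (ln (max 1 \<bar>real_of_int (q j)\<bar>) - ln e + u)" for j unfolding a_def by simp
  have "a \<in> C0 t"
  proof (rule C0_I)
    show "0 < a $ Inl i" for i unfolding aL using g0[of i] ge[of i] e by simp
    show "a $ Inr j < 0" for j
    proof -
      have "0 \<le> ln (max 1 \<bar>real_of_int (q j)\<bar>)" "ln e \<le> 0" using e by simp_all
      then show ?thesis using u0 unfolding aR by linarith
    qed
    have "(\<Sum>i\<in>UNIV. a $ Inl i) = real ?m * ln e - ln (\<Prod>i\<in>UNIV. g i)"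
      using g0 by (simp add: aL sum_subtractf ln_prod less_imp_neq[symmetric])
    then show "(\<Sum>i\<in>UNIV. a $ Inl i) = t" unfolding prod_g using e by (simp add: ln_mult ln_realpow)
    have "(\<Sum>j\<in>UNIV. a $ Inr j) = - ((\<Sum>j\<in>UNIV. ln (max 1 \<bar>real_of_int (q j)\<bar>)) - ?n * ln e + ?n * u)"
      by (simp add: aR sum_negf sum.distrib sum_subtractf algebra_simps)
    also have "(\<Sum>j\<in>UNIV. ln (max 1 \<bar>real_of_int (q j)\<bar>)) = ln (Pi_plus q)" by (subst ln_prod) auto
    finally show "(\<Sum>j\<in>UNIV. a $ Inr j) = - t" unfolding u_def by simp
  qed
  moreover have "exp (a $ Inl i) * ?f i < e" for i
  proof -
    have "exp (a $ Inl i) * ?f i < exp (a $ Inl i) * g i" using fg[of i] by simp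
    also have "\<dots> = e" using g0[of i] e by (simp add: aL exp_diff)
    finally show ?thesis .
  qed
  moreover have "exp (a $ Inr j) * max 1 \<bar>real_of_int (q j)\<bar> < e" for j
  proof -
    have "exp (a $ Inr j) * max 1 \<bar>real_of_int (q j)\<bar> = e * exp (- u)"
      unfolding aR using e by (simp add: exp_diff exp_minus exp_add field_simps)
    also have "\<dots> < e" using e u0 by simp
    finally show ?thesis .
  qed
  ultimately show ?thesis using that by blast
qed

lemma short_orbit_vector_of_approximation:
  fixes Y :: "real^'n::finite^'m::finite" and p :: "'m \<Rightarrow> int" and q :: "'n \<Rightarrow> int"
  assumes e: "0 < e" "e \<le> 1" and t: "0 < t" and q: "q \<noteq> (\<lambda>_. 0)"
    and err: "\<And>i. approx_error Y p q i < e"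
    and height: "Pi_plus q < e ^ CARD('n) * exp t"
    and prod_err: "(\<Prod>i\<in>UNIV. approx_error Y p q i) * exp t < e ^ CARD('m)"
  obtains a where "a \<in> (C0 t :: (real^('m + 'n)) set)" "delta (exp_act a ` lattice_xY Y) < e"
proof -
  obtain a :: "real^('m + 'n)" where a: "a \<in> C0 t" and
    aL: "\<And>i. exp (a $ Inl i) * approx_error Y p q i < e" and
    aR: "\<And>j. exp (a $ Inr j) * max 1 \<bar>real_of_int (q j)\<bar> < e"
    using C0_point_of_approximation[OF e t err height prod_err] by blast
  define w where "w = exp_act a (xY_point Y (- p) q)"
  have w: "w \<in> exp_act a ` lattice_xY Y" unfolding w_def using mem_lattice_xY_iff by blast
  obtain j0 where "q j0 \<noteq> 0" using q by auto
  then have "w $ Inr j0 \<noteq> 0" unfolding w_def by simp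
  then have w0: "w \<noteq> 0" by (metis zero_index)
  have "\<bar>w $ k\<bar> < e" for k
  proof (cases k)
    case (Inl i)
    then show ?thesis using aL[of i] unfolding w_def by (simp add: abs_mult)
  next
    case (Inr j)
    have "\<bar>w $ k\<bar> \<le> exp (a $ Inr j) * max 1 \<bar>real_of_int (q j)\<bar>"
      unfolding w_def Inr by (simp add: abs_mult)
    then show ?thesis using aR[of j] by linarith
  qed
  then have "supnorm w < e" unfolding supnorm_less_iff ..
  then have "delta (exp_act a ` lattice_xY Y) < e" using delta_le_supnorm[OF w w0] by linarith
  with a show ?thesis by (rule that)
qed

lemma dirichlet_simultaneous:
  fixes x :: "'m::finite \<Rightarrow> real" and M :: nat
  assumes M: "1 \<le> M"
  obtains N :: nat where "1 \<le> N" "N \<le> M ^ CARD('m)"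
    "\<And>i. \<exists>p::int. \<bar>real N * x i - of_int p\<bar> < 1 / real M"
proof -
  define F where "F N i = \<lfloor>real M * frac (real N * x i)\<rfloor>" for N :: nat and i
  define S where "S = PiE (UNIV::'m set) (\<lambda>_. {0..<int M})"
  have "F ` {0..M ^ CARD('m)} \<subseteq> S"
  proof -
    have "F N i \<in> {0..<int M}" for N i
    proof -
      have "0 \<le> frac (real N * x i)" "frac (real N * x i) < 1" by (auto simp: frac_lt_1)
      then have "0 \<le> real M * frac (real N * x i)" "real M * frac (real N * x i) < real M"
        using M by auto
      then show ?thesis unfolding F_def by (auto simp: floor_less_iff)
    qed
    then show ?thesis unfolding S_def by (auto simp: PiE_UNIV_domain)
  qed
  then have "card (F ` {0..M ^ CARD('m)}) \<le> card S"
    by (intro card_mono) (simp_all add: S_def finite_PiE)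
  also have "card S = M ^ CARD('m)" unfolding S_def by (simp add: card_PiE)
  finally have "card (F ` {0..M ^ CARD('m)}) < card {0..M ^ CARD('m)}" by simp
  then have "\<not> inj_on F {0..M ^ CARD('m)}" by (rule pigeonhole)
  then obtain N1 N2 where N12: "N1 \<le> M ^ CARD('m)" "N2 \<le> M ^ CARD('m)" "F N1 = F N2" "N1 < N2"
    unfolding inj_on_def by (metis atLeastAtMost_iff linorder_neqE_nat)
  have "\<exists>p::int. \<bar>real (N2 - N1) * x i - of_int p\<bar> < 1 / real M" for i
  proof -
    let ?d = "frac (real N2 * x i) - frac (real N1 * x i)"
    have "\<lfloor>real M * frac (real N2 * x i)\<rfloor> = \<lfloor>real M * frac (real N1 * x i)\<rfloor>"
      using N12(3) unfolding F_def by metis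
    then have "\<bar>real M * frac (real N2 * x i) - real M * frac (real N1 * x i)\<bar> < 1" by linarith
    then have "real M * \<bar>?d\<bar> < 1" by (simp add: abs_mult right_diff_distrib[symmetric])
    then have "\<bar>?d\<bar> < 1 / real M" using M by (simp add: field_simps)
    moreover have "real (N2 - N1) * x i = of_int (\<lfloor>real N2 * x i\<rfloor> - \<lfloor>real N1 * x i\<rfloor>) + ?d"
      using N12(4) by (simp add: frac_def of_nat_diff algebra_simps)
    ultimately show ?thesis by (metis add_diff_cancel_left')
  qed
  moreover have "1 \<le> N2 - N1" "N2 - N1 \<le> M ^ CARD('m)" using N12 by auto
  ultimately show ?thesis using that by blast
qed

text \<open>Multiply \<open>q\<close> by the Dirichlet denominator \<open>N \<le> M\<^sup>m\<close> of \<open>Yq\<close>: rows whose error is already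
  below \<open>1/(M\<^sup>m\<^sup>+\<^sup>1)\<close> keep \<open>N p\<^sub>i\<close> and gain at most the factor \<open>N\<close>; the others take the
  Dirichlet approximation, whose error \<open>1/M\<close> is at most \<open>M\<^sup>m\<close> times the old one.\<close>

lemma dirichlet_improvement:
  fixes Y :: "real^'n::finite^'m::finite" and M :: nat
  assumes M: "1 \<le> M" and q: "q \<noteq> (\<lambda>_. 0)"
  obtains p' q' where "q' \<noteq> (\<lambda>_. 0)" "\<And>i. approx_error Y p' q' i < 1 / real M"
    "\<And>i. approx_error Y p' q' i \<le> real M ^ CARD('m) * approx_error Y p q i"
    "Pi_plus q' \<le> (real M ^ CARD('m)) ^ CARD('n) * Pi_plus q"
proof -
  define K :: real where "K = real M ^ CARD('m)"
  define \<eta> :: real where "\<eta> = 1 / (real M * K)"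
  have K1: "1 \<le> K" unfolding K_def using M by simp
  have K\<eta>: "K * \<eta> = 1 / real M" unfolding \<eta>_def using K1 M by (simp add: field_simps)
  define x where "x i = (\<Sum>j\<in>UNIV. Y $ i $ j * of_int (q j))" for i
  obtain N :: nat where N: "1 \<le> N" "N \<le> M ^ CARD('m)"
    and "\<And>i. \<exists>p::int. \<bar>real N * x i - of_int p\<bar> < 1 / real M"
    using dirichlet_simultaneous[OF M] by blast
  then obtain P where P: "\<And>i. \<bar>real N * x i - of_int (P i)\<bar> < 1 / real M" by metis
  have NK: "real N \<le> K" unfolding K_def using N(2) by (metis of_nat_le_iff of_nat_power)
  define q' where "q' j = int N * q j" for j
  define p' where "p' i = (if approx_error Y p q i < \<eta> then int N * p i else P i)" for i
  have err': "approx_error Y p' q' i = \<bar>real N * x i - of_int (p' i)\<bar>" for i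
    unfolding q'_def x_def by (simp add: sum_distrib_left algebra_simps)
  have q': "q' \<noteq> (\<lambda>_. 0)" using q N(1) unfolding q'_def by (auto simp: fun_eq_iff)
  have err: "approx_error Y p' q' i < 1 / real M \<and> approx_error Y p' q' i \<le> K * approx_error Y p q i"
    for i
  proof (cases "approx_error Y p q i < \<eta>")
    case True
    have "approx_error Y p' q' i = real N * approx_error Y p q i"
      unfolding err' using True by (simp add: p'_def x_def abs_mult right_diff_distrib[symmetric])
    moreover have "real N * approx_error Y p q i \<le> K * approx_error Y p q i"
      using NK by (simp add: mult_right_mono)
    moreover have "K * approx_error Y p q i < K * \<eta>" using True K1 by simp
    ultimately show ?thesis using K\<eta> by linarith
  next
    case False
    then have "K * \<eta> \<le> K * approx_error Y p q i" using K1 by (intro mult_left_mono) auto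
    then have "1 / real M \<le> K * approx_error Y p q i" using K\<eta> by simp
    then show ?thesis using False P[of i] unfolding err' by (simp add: p'_def)
  qed
  have "Pi_plus q' \<le> (\<Prod>j\<in>(UNIV::'n set). K * max 1 \<bar>real_of_int (q j)\<bar>)"
  proof (rule prod_mono)
    fix j
    have "max 1 \<bar>real_of_int (q' j)\<bar> \<le> real N * max 1 \<bar>real_of_int (q j)\<bar>"
      using N(1) by (auto simp: q'_def abs_mult intro: mult_mono order.trans[of 1 "real N"])
    also have "\<dots> \<le> K * max 1 \<bar>real_of_int (q j)\<bar>" using NK by (simp add: mult_right_mono)
    finally show "0 \<le> max 1 \<bar>real_of_int (q' j)\<bar> \<and> max 1 \<bar>real_of_int (q' j)\<bar> \<le> K * max 1 \<bar>real_of_int (q j)\<bar>"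
      by simp
  qed
  also have "\<dots> = K ^ CARD('n) * Pi_plus q" by (simp add: prod.distrib)
  finally show ?thesis using q' err unfolding K_def by (intro that[of q' p']) auto
qed

lemma mem_S_times_psi1_iff:
  "Y \<in> S_times (\<lambda>x. c * psi1 x) T \<longleftrightarrow>
    (\<exists>p q. q \<noteq> (\<lambda>_. 0) \<and> (\<Prod>i\<in>UNIV. approx_error Y p q i) < c / T \<and> Pi_plus q < T)"
  unfolding S_times_def psi1_def by simp

lemma short_orbit_vector_of_S_times:
  fixes Y :: "real^'n::finite^'m::finite"
  assumes "0 < \<epsilon>"
  obtains c \<kappa> where "0 < c" "0 < \<kappa>"
    "\<And>t. 0 < t \<Longrightarrow> Y \<in> S_times (\<lambda>x. c * psi1 x) (\<kappa> * exp t) \<Longrightarrow>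
       \<exists>a\<in>(C0 t :: (real^('m + 'n)) set). delta (exp_act a ` lattice_xY Y) < \<epsilon>"
proof -
  let ?m = "CARD('m)" and ?n = "CARD('n)"
  define e where "e = min \<epsilon> (1/2)"
  have e: "0 < e" "e \<le> \<epsilon>" "e \<le> 1" using assms unfolding e_def by auto
  define M :: nat where "M = nat \<lceil>1 / e\<rceil> + 1"
  have M: "1 \<le> M" "1 / real M < e"
  proof -
    have "1 / e < real M" "0 < real M" unfolding M_def by linarith+
    then show "1 / real M < e" using e by (simp add: field_simps)
  qed (simp add: M_def)
  define K :: real where "K = real M ^ ?m"
  have K: "0 < K" unfolding K_def using M by simp
  define \<kappa> where "\<kappa> = e ^ ?n / K ^ ?n"
  define c where "c = e ^ (?m + ?n) / K ^ (?m + ?n)"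
  have "\<exists>a\<in>(C0 t :: (real^('m + 'n)) set). delta (exp_act a ` lattice_xY Y) < \<epsilon>"
    if t: "0 < t" and Y: "Y \<in> S_times (\<lambda>x. c * psi1 x) (\<kappa> * exp t)" for t
  proof -
    obtain p q where q: "q \<noteq> (\<lambda>_. 0)"
      and err: "(\<Prod>i\<in>UNIV. approx_error Y p q i) < c / (\<kappa> * exp t)"
      and height: "Pi_plus q < \<kappa> * exp t"
      using Y unfolding mem_S_times_psi1_iff by blast
    obtain p' q' where q': "q' \<noteq> (\<lambda>_. 0)" and err'_M: "\<And>i. approx_error Y p' q' i < 1 / real M"
      and err'_le: "\<And>i. approx_error Y p' q' i \<le> K * approx_error Y p q i"
      and height': "Pi_plus q' \<le> K ^ ?n * Pi_plus q"
      using dirichlet_improvement[OF M(1) q] unfolding K_def by blast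
    have err'_small: "approx_error Y p' q' i < e" for i using err'_M[of i] M(2) by linarith
    have "K ^ ?n * Pi_plus q < K ^ ?n * (\<kappa> * exp t)" using height K by simp
    with height' have "Pi_plus q' < K ^ ?n * (\<kappa> * exp t)" by linarith
    also have "\<dots> = e ^ ?n * exp t" unfolding \<kappa>_def using K by simp
    finally have height'': "Pi_plus q' < e ^ ?n * exp t" .
    have "(\<Prod>i\<in>UNIV. approx_error Y p' q' i) \<le> (\<Prod>i\<in>(UNIV::'m set). K * approx_error Y p q i)"
      using err'_le by (intro prod_mono) auto
    also have "\<dots> = K ^ ?m * (\<Prod>i\<in>UNIV. approx_error Y p q i)" by (simp add: prod.distrib)
    also have "\<dots> < K ^ ?m * (c / (\<kappa> * exp t))" using err K by (intro mult_strict_left_mono) simp_all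
    also have "\<dots> = e ^ ?m / exp t"
      unfolding c_def \<kappa>_def using K e by (simp add: field_simps power_add)
    finally have "(\<Prod>i\<in>UNIV. approx_error Y p' q' i) * exp t < e ^ ?m" by (simp add: field_simps)
    then obtain a where "a \<in> (C0 t :: (real^('m + 'n)) set)" "delta (exp_act a ` lattice_xY Y) < e"
      using short_orbit_vector_of_approximation[OF e(1,3) t q' err'_small height''] by blast
    then show ?thesis using e(2) by force
  qed
  moreover have "0 < c" "0 < \<kappa>" unfolding c_def \<kappa>_def using e K by simp_all
  ultimately show ?thesis using that by blast
qed

lemma S_times_of_short_orbit_vector:
  fixes Y :: "real^'n::finite^'m::finite"
  assumes c: "0 < c"
  obtains e where "0 < e"
    "\<And>t (a::real^('m + 'n)). a \<in> C0 t \<Longrightarrow>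
       delta (exp_act a ` lattice_xY Y) < e \<Longrightarrow> Y \<in> S_times (\<lambda>x. c * psi1 x) (exp t)"
proof -
  define e where "e = min (1/2) c"
  have e: "0 < e" "e \<le> 1" using c unfolding e_def by auto
  have "e ^ CARD('m) \<le> e ^ 1" using e by (intro power_decreasing) auto
  then have em: "e ^ CARD('m) \<le> c" unfolding e_def by simp
  have "Y \<in> S_times (\<lambda>x. c * psi1 x) (exp t)"
    if a: "a \<in> C0 t" and d: "delta (exp_act a ` lattice_xY Y) < e"
    for t and a :: "real^('m + 'n)"
  proof -
    obtain p q where q: "q \<noteq> (\<lambda>_. 0)"
      and err: "(\<Prod>i\<in>UNIV. approx_error Y p q i) * exp t < e ^ CARD('m)"
      and height: "Pi_plus q < exp t"
      using approximation_of_short_orbit_vector[OF a e d] by blast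
    have "(\<Prod>i\<in>UNIV. approx_error Y p q i) < c / exp t" using err em by (simp add: field_simps)
    then show ?thesis unfolding mem_S_times_psi1_iff using q height by blast
  qed
  with e(1) show ?thesis using that by blast
qed

theorem Sing_times_iff_short_orbit_vectors:
  fixes Y :: "real^'n::finite^'m::finite"
  shows "Y \<in> Sing_times \<longleftrightarrow>
    (\<forall>\<epsilon>>0. \<exists>t0>0. \<forall>t\<ge>t0. \<exists>a\<in>(C0 t :: (real^('m + 'n)) set). delta (exp_act a ` lattice_xY Y) < \<epsilon>)"
proof (intro iffI allI impI)
  fix \<epsilon> :: real assume Y: "Y \<in> Sing_times" and \<epsilon>: "0 < \<epsilon>"
  obtain c \<kappa> where c\<kappa>: "0 < c" "0 < \<kappa>" and short:
    "\<And>t. 0 < t \<Longrightarrow> Y \<in> S_times (\<lambda>x. c * psi1 x) (\<kappa> * exp t) \<Longrightarrow>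
       \<exists>a\<in>(C0 t :: (real^('m + 'n)) set). delta (exp_act a ` lattice_xY Y) < \<epsilon>"
    using short_orbit_vector_of_S_times[OF \<epsilon>, where Y = Y] by blast
  obtain T0 where T0: "1 < T0" "\<forall>T\<ge>T0. Y \<in> S_times (\<lambda>x. c * psi1 x) T"
    using Y c\<kappa>(1) unfolding Sing_times_def D_times_def by fastforce
  have "T0 \<le> \<kappa> * exp t" if "ln (T0 / \<kappa>) \<le> t" for t
  proof -
    have "T0 / \<kappa> = exp (ln (T0 / \<kappa>))" using T0(1) c\<kappa>(2) by simp
    also have "\<dots> \<le> exp t" using that by simp
    finally show ?thesis using c\<kappa>(2) by (simp add: field_simps)
  qed
  with T0(2) show "\<exists>t0>0. \<forall>t\<ge>t0. \<exists>a\<in>(C0 t :: (real^('m + 'n)) set). delta (exp_act a ` lattice_xY Y) < \<epsilon>"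
    using short by (intro exI[of _ "max 1 (ln (T0 / \<kappa>))"]) auto
next
  assume short: "\<forall>\<epsilon>>0. \<exists>t0>0. \<forall>t\<ge>t0. \<exists>a\<in>(C0 t :: (real^('m + 'n)) set).
    delta (exp_act a ` lattice_xY Y) < \<epsilon>"
  have "Y \<in> D_times (\<lambda>x. c * psi1 x)" if "0 < c" for c
  proof -
    obtain e where "0 < e" and approx: "\<And>t (a::real^('m + 'n)). a \<in> C0 t \<Longrightarrow>
      delta (exp_act a ` lattice_xY Y) < e \<Longrightarrow> Y \<in> S_times (\<lambda>x. c * psi1 x) (exp t)"
      using S_times_of_short_orbit_vector[OF \<open>0 < c\<close>, where Y = Y] by blast
    then obtain t0 where t0: "\<forall>t\<ge>t0. \<exists>a\<in>(C0 t :: (real^('m + 'n)) set).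
      delta (exp_act a ` lattice_xY Y) < e" using short by blast
    have "Y \<in> S_times (\<lambda>x. c * psi1 x) T" if T: "max 2 (exp t0) \<le> T" for T
    proof -
      have "0 < T" "t0 \<le> ln T" using T by (auto simp: ln_ge_iff)
      then show ?thesis using t0 approx by fastforce
    qed
    then show ?thesis unfolding D_times_def by (intro UN_I[of "max 2 (exp t0)"]) auto
  qed
  then show "Y \<in> Sing_times" unfolding Sing_times_def by auto
qed

theorem WA_times_iff_short_orbit_vectors:
  fixes Y :: "real^'n::finite^'m::finite"
  shows "Y \<in> WA_times \<longleftrightarrow>
    (\<forall>\<epsilon>>0. \<forall>R. \<exists>t\<ge>R. t \<ge> 0 \<and> (\<exists>a\<in>(C0 t :: (real^('m + 'n)) set).
       delta (exp_act a ` lattice_xY Y) < \<epsilon>))"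
proof (intro iffI allI impI)
  fix \<epsilon> R :: real assume Y: "Y \<in> WA_times" and \<epsilon>: "0 < \<epsilon>"
  obtain c \<kappa> where c\<kappa>: "0 < c" "0 < \<kappa>" and short:
    "\<And>t. 0 < t \<Longrightarrow> Y \<in> S_times (\<lambda>x. c * psi1 x) (\<kappa> * exp t) \<Longrightarrow>
       \<exists>a\<in>(C0 t :: (real^('m + 'n)) set). delta (exp_act a ` lattice_xY Y) < \<epsilon>"
    using short_orbit_vector_of_S_times[OF \<epsilon>, where Y = Y] by blast
  define r where "r = max R 1"
  obtain T where T: "\<kappa> * exp r \<le> T" "Y \<in> S_times (\<lambda>x. c * psi1 x) T"
    using Y c\<kappa>(1) unfolding WA_times_def W_times_def by blast
  define t where "t = ln (T / \<kappa>)"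
  have "0 < T" using T(1) c\<kappa>(2) by (metis exp_gt_zero mult_pos_pos order.strict_trans2)
  have "exp r \<le> T / \<kappa>" using T(1) c\<kappa>(2) by (simp add: field_simps)
  then have "r \<le> t" unfolding t_def using \<open>0 < T\<close> c\<kappa>(2) ln_ge_iff[of "T / \<kappa>" r] by simp
  moreover have "T = \<kappa> * exp t" unfolding t_def using \<open>0 < T\<close> c\<kappa>(2) by simp
  ultimately show "\<exists>t\<ge>R. t \<ge> 0 \<and> (\<exists>a\<in>(C0 t :: (real^('m + 'n)) set).
      delta (exp_act a ` lattice_xY Y) < \<epsilon>)"
    using short[of t] T(2) unfolding r_def by (intro exI[of _ t]) auto
next
  assume short: "\<forall>\<epsilon>>0. \<forall>R. \<exists>t\<ge>R. t \<ge> 0 \<and> (\<exists>a\<in>(C0 t :: (real^('m + 'n)) set).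
    delta (exp_act a ` lattice_xY Y) < \<epsilon>)"
  have "Y \<in> W_times (\<lambda>x. c * psi1 x)" if "0 < c" for c
  proof -
    obtain e where "0 < e" and approx: "\<And>t (a::real^('m + 'n)). a \<in> C0 t \<Longrightarrow>
      delta (exp_act a ` lattice_xY Y) < e \<Longrightarrow> Y \<in> S_times (\<lambda>x. c * psi1 x) (exp t)"
      using S_times_of_short_orbit_vector[OF \<open>0 < c\<close>, where Y = Y] by blast
    have "\<exists>T\<ge>R. T > 1 \<and> Y \<in> S_times (\<lambda>x. c * psi1 x) T" for R
    proof -
      obtain t a where t: "max R 1 \<le> t" "a \<in> (C0 t :: (real^('m + 'n)) set)"
        "delta (exp_act a ` lattice_xY Y) < e"
        using short \<open>0 < e\<close> by blast
      moreover have "R \<le> exp t" using t(1) exp_ge_add_one_self[of t] by linarith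
      ultimately show ?thesis using approx by (intro exI[of _ "exp t"]) auto
    qed
    then show ?thesis unfolding W_times_def by blast
  qed
  then show "Y \<in> WA_times" unfolding WA_times_def by auto
qed

section \<open>Integer spans and Gram--Schmidt heights\<close>

definition int_span :: "nat \<Rightarrow> (nat \<Rightarrow> 'a::real_vector) \<Rightarrow> 'a set" where
  "int_span r b = {\<Sum>i<r. of_int (z i) *\<^sub>R b i | z :: nat \<Rightarrow> int. True}"

lemma int_span_add: assumes "x \<in> int_span r b" "y \<in> int_span r b" shows "x + y \<in> int_span r b"
proof -
  obtain z z' where "x = (\<Sum>i<r. of_int (z i) *\<^sub>R b i)" "y = (\<Sum>i<r. of_int (z' i) *\<^sub>R b i)"
    using assms unfolding int_span_def by blast
  then have "x + y = (\<Sum>i<r. of_int (z i + z' i) *\<^sub>R b i)"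
    by (simp add: sum.distrib[symmetric] scaleR_add_left)
  then show ?thesis unfolding int_span_def by (auto intro!: exI[of _ "\<lambda>i. z i + z' i"])
qed

lemma int_span_scale: assumes "x \<in> int_span r b" shows "of_int n *\<^sub>R x \<in> int_span r b"
proof -
  obtain z where "x = (\<Sum>i<r. of_int (z i) *\<^sub>R b i)" using assms unfolding int_span_def by blast
  then have "of_int n *\<^sub>R x = (\<Sum>i<r. of_int (n * z i) *\<^sub>R b i)" by (simp add: scaleR_sum_right)
  then show ?thesis unfolding int_span_def by (auto intro!: exI[of _ "\<lambda>i. n * z i"])
qed

lemma int_span_neg: "x \<in> int_span r b \<Longrightarrow> - x \<in> int_span r b"
  using int_span_scale[of x r b "-1"] by simp

lemma int_span_diff: "x \<in> int_span r b \<Longrightarrow> y \<in> int_span r b \<Longrightarrow> x - y \<in> int_span r b"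
  using int_span_add[of x r b "- y"] int_span_neg[of y r b] by simp

lemma int_span_base: "i < r \<Longrightarrow> b i \<in> int_span r b"
  unfolding int_span_def
  by (rule CollectI, rule exI[of _ "\<lambda>j. if j = i then 1 else 0"])
     (simp add: if_distrib[of "\<lambda>x. of_int x *\<^sub>R _"] sum.delta cong: if_cong)

lemma int_span_sum:
  fixes s :: nat
  assumes "\<And>i. i < s \<Longrightarrow> b' i \<in> int_span r b"
  shows "(\<Sum>i<s. of_int (z i) *\<^sub>R b' i) \<in> int_span r b"
  using assms
proof (induction s)
  case 0
  have "(\<Sum>i<r. of_int 0 *\<^sub>R b i) = 0" by simp
  then show ?case unfolding int_span_def by (auto intro!: exI[of _ "\<lambda>_. 0"])
next
  case (Suc s)
  then show ?case by (simp add: int_span_add int_span_scale)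
qed

lemma int_span_subset: "(\<And>i. i < s \<Longrightarrow> b' i \<in> int_span r b) \<Longrightarrow> int_span s b' \<subseteq> int_span r b"
  using int_span_sum unfolding int_span_def[of s b'] by blast

lemma int_span_eqI:
  "(\<And>i. i < r \<Longrightarrow> b' i \<in> int_span r b) \<Longrightarrow> (\<And>i. i < r \<Longrightarrow> b i \<in> int_span r b') \<Longrightarrow>
    int_span r b' = int_span r b"
  using int_span_subset by (metis subset_antisym)

lemma int_span_mono: "r \<le> s \<Longrightarrow> int_span r b \<subseteq> int_span s b"
  by (intro int_span_subset int_span_base) simp

lemma int_span_cong: "(\<And>i. i < r \<Longrightarrow> b' i = b i) \<Longrightarrow> int_span r b' = int_span r b"
  unfolding int_span_def by (metis (no_types, lifting) lessThan_iff sum.cong)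

lemma span_int_span: "span (int_span r b) = span (b ` {..<r})"
proof -
  have "(\<Sum>i<r. of_int (z i) *\<^sub>R b i) \<in> span (b ` {..<r})" for z
    by (intro span_sum span_scale span_base) auto
  then have "int_span r b \<subseteq> span (b ` {..<r})" unfolding int_span_def by auto
  moreover have "b ` {..<r} \<subseteq> int_span r b" by (auto intro: int_span_base)
  ultimately show ?thesis by (metis span_mono span_span subset_antisym)
qed

lemma span_prefix_eq_if_int_span_eq:
  "int_span r b' = int_span r b \<Longrightarrow> span (b' ` {..<r}) = span (b ` {..<r})"
  by (metis span_int_span)

lemma int_span_swap_sub:
  assumes "Suc i < r"
  shows "int_span r (b(i := b (Suc i) - of_int n *\<^sub>R b i, Suc i := b i)) = int_span r b"
    (is "int_span r ?b' = _")
proof (rule int_span_eqI)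
  have b: "b i \<in> int_span r b" "b (Suc i) \<in> int_span r b" using assms by (auto intro: int_span_base)
  have b': "?b' i \<in> int_span r ?b'" "?b' (Suc i) \<in> int_span r ?b'"
    using int_span_base[of i r ?b'] int_span_base[of "Suc i" r ?b'] assms by simp_all
  show "?b' l \<in> int_span r b" if "l < r" for l
    using that b int_span_base[of l r b] by (auto intro: int_span_diff int_span_scale)
  have "b (Suc i) = ?b' i + of_int n *\<^sub>R ?b' (Suc i)" by simp
  then have "b (Suc i) \<in> int_span r ?b'" using b' by (metis int_span_add int_span_scale)
  then show "b l \<in> int_span r ?b'" if "l < r" for l
    using that b' int_span_base[of l r ?b'] by (cases "l = i \<or> l = Suc i") auto
qed

lemma int_span_update_sub:
  assumes "r < s" "c \<in> int_span r b"
  shows "int_span s (b(r := b r - c)) = int_span s b"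
    (is "int_span s ?b' = _")
proof (rule int_span_eqI)
  have "int_span r b \<subseteq> int_span s b" "int_span r ?b' \<subseteq> int_span s ?b'"
    using assms(1) by (simp_all add: int_span_mono)
  moreover have "int_span r ?b' = int_span r b" by (rule int_span_cong) simp
  ultimately have c: "c \<in> int_span s b" "c \<in> int_span s ?b'" using assms(2) by auto
  show "?b' l \<in> int_span s b" if "l < s" for l
    using that c int_span_base[of l s b] by (auto intro: int_span_diff)
  have "b r = ?b' r + c" by simp
  then have "b r \<in> int_span s ?b'" using c int_span_base[OF assms(1), of ?b'] by (metis int_span_add)
  then show "b l \<in> int_span s ?b'" if "l < s" for l
    using that int_span_base[of l s ?b'] by (cases "l = r") auto
qed

definition gs_height :: "(nat \<Rightarrow> 'a::euclidean_space) \<Rightarrow> nat \<Rightarrow> real" where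
  "gs_height b i = infdist (b i) (span (b ` {..<i}))"

lemma infdist_span_orthogonal_decomp:
  fixes x :: "'a::euclidean_space"
  assumes "x = y + w" "y \<in> span S" "\<And>v. v \<in> span S \<Longrightarrow> orthogonal w v"
  shows "infdist x (span S) = norm w"
proof (rule antisym)
  show "infdist x (span S) \<le> norm w"
    using infdist_le[OF assms(2), of x] assms(1) by (simp add: dist_norm)
  have ne: "span S \<noteq> {}" using span_zero by blast
  show "norm w \<le> infdist x (span S)"
    unfolding infdist_notempty[OF ne]
  proof (rule cINF_greatest[OF ne])
    fix v assume v: "v \<in> span S"
    then have "orthogonal w (y - v)" using assms(2,3) span_diff by blast
    moreover have "dist x v = norm (w + (y - v))" using assms(1) by (simp add: dist_norm algebra_simps)
    ultimately have "(dist x v)\<^sup>2 = (norm w)\<^sup>2 + (norm (y - v))\<^sup>2"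
      by (simp add: norm_add_Pythagorean)
    then show "norm w \<le> dist x v" by (metis le_add_same_cancel1 power2_le_imp_le zero_le_dist zero_le_power2)
  qed
qed

lemma gs_height_nonneg: "0 \<le> gs_height b i"
  unfolding gs_height_def by (rule infdist_nonneg)

lemma gs_height_0: "gs_height b 0 = norm (b 0)"
  unfolding gs_height_def by (simp add: dist_norm)

lemma gs_height_cong: "(\<And>l. l \<le> j \<Longrightarrow> b' l = b l) \<Longrightarrow> gs_height b' j = gs_height b j"
  unfolding gs_height_def by (metis (no_types, lifting) image_cong lessThan_iff less_imp_le order_refl)

lemma gs_height_translate:
  fixes b :: "nat \<Rightarrow> 'a::euclidean_space"
  assumes "b' j = b j + v" "v \<in> span (b ` {..<j})" "span (b' ` {..<j}) = span (b ` {..<j})"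
  shows "gs_height b' j = gs_height b j"
proof -
  obtain y w where d: "y \<in> span (b ` {..<j})" "\<And>u. u \<in> span (b ` {..<j}) \<Longrightarrow> orthogonal w u"
    "b j = y + w"
    using orthogonal_subspace_decomp_exists[of "b ` {..<j}" "b j"] by metis
  have "gs_height b j = norm w" unfolding gs_height_def by (rule infdist_span_orthogonal_decomp[OF d(3,1,2)])
  moreover have "gs_height b' j = norm w" unfolding gs_height_def assms(3)
    by (rule infdist_span_orthogonal_decomp[of _ "y + v"]) (use d assms(1,2) span_add in auto)
  ultimately show ?thesis by simp
qed

lemma span_prefix_obtain_coeffs:
  fixes b :: "nat \<Rightarrow> 'a::real_vector"
  assumes "y \<in> span (b ` {..<r})"
  obtains x where "y = (\<Sum>l<r. x l *\<^sub>R b l)"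
  using assms
proof (induction r arbitrary: y thesis)
  case 0 then show ?case by simp
next
  case (Suc r)
  have "b ` {..<Suc r} = insert (b r) (b ` {..<r})" by (auto simp: lessThan_Suc)
  then obtain c where "y - c *\<^sub>R b r \<in> span (b ` {..<r})" using Suc.prems(2) span_breakdown_eq by metis
  then obtain x where x: "y - c *\<^sub>R b r = (\<Sum>l<r. x l *\<^sub>R b l)" using Suc.IH by blast
  have "(\<Sum>l<r. (x(r := c)) l *\<^sub>R b l) = (\<Sum>l<r. x l *\<^sub>R b l)" by (intro sum.cong) auto
  then have "y = (\<Sum>l<Suc r. (x(r := c)) l *\<^sub>R b l)" using x by (simp add: algebra_simps)
  then show ?case by (rule Suc.prems(1))
qed

lemma gram_schmidt_exists:
  fixes b :: "nat \<Rightarrow> 'a::euclidean_space"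
  obtains w where "\<And>i. b i - w i \<in> span (b ` {..<i})"
    "\<And>i v. v \<in> span (b ` {..<i}) \<Longrightarrow> orthogonal (w i) v"
proof -
  have "\<forall>i. \<exists>w. b i - w \<in> span (b ` {..<i}) \<and> (\<forall>v\<in>span (b ` {..<i}). orthogonal w v)"
  proof
    fix i
    obtain y w where "y \<in> span (b ` {..<i})" "\<And>v. v \<in> span (b ` {..<i}) \<Longrightarrow> orthogonal w v"
      "b i = y + w"
      using orthogonal_subspace_decomp_exists[of "b ` {..<i}" "b i"] by metis
    then show "\<exists>w. b i - w \<in> span (b ` {..<i}) \<and> (\<forall>v\<in>span (b ` {..<i}). orthogonal w v)"
      by (intro exI[of _ w]) auto
  qed
  then have "\<exists>w. \<forall>i. b i - w i \<in> span (b ` {..<i}) \<and> (\<forall>v\<in>span (b ` {..<i}). orthogonal (w i) v)"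
    by (rule choice)
  then obtain w where "\<forall>i. b i - w i \<in> span (b ` {..<i}) \<and> (\<forall>v\<in>span (b ` {..<i}). orthogonal (w i) v)"
    by blast
  then show ?thesis using that by blast
qed

lemma gs_height_eq_norm_gram_schmidt:
  fixes b :: "nat \<Rightarrow> 'a::euclidean_space"
  assumes "b i - w i \<in> span (b ` {..<i})" "\<And>v. v \<in> span (b ` {..<i}) \<Longrightarrow> orthogonal (w i) v"
  shows "gs_height b i = norm (w i)"
  unfolding gs_height_def
  by (rule infdist_span_orthogonal_decomp[of _ "b i - w i"]) (use assms in auto)

lemma gram_schmidt_orthogonal:
  fixes b :: "nat \<Rightarrow> 'a::euclidean_space"
  assumes "\<And>i. b i - w i \<in> span (b ` {..<i})" "\<And>i v. v \<in> span (b ` {..<i}) \<Longrightarrow> orthogonal (w i) v"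
    and "j < i"
  shows "inner (w i) (w j) = 0"
proof -
  have "span (b ` {..<j}) \<subseteq> span (b ` {..<i})" using \<open>j < i\<close> by (intro span_mono) auto
  then have "b j - w j \<in> span (b ` {..<i})" using assms(1) by blast
  moreover have "b j \<in> span (b ` {..<i})" using \<open>j < i\<close> by (intro span_base) auto
  ultimately have "b j - (b j - w j) \<in> span (b ` {..<i})" by (rule span_diff[rotated])
  then have "w j \<in> span (b ` {..<i})" by simp
  then show ?thesis using assms(2) unfolding orthogonal_def by simp
qed

section \<open>Lattice bases and determinants\<close>

lemma of_int_floor_int_vector: "z \<in> int_vectors \<Longrightarrow> of_int \<lfloor>z $ i\<rfloor> = z $ i"
  unfolding int_vectors_def by (auto elim: Ints_cases)

text \<open>The matrix whose column \<open>e i\<close> is \<open>b i\<close>, for an enumeration \<open>e\<close> of the index type.\<close>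

definition basis_matrix :: "(nat \<Rightarrow> 'k::finite) \<Rightarrow> (nat \<Rightarrow> real^'k) \<Rightarrow> real^'k^'k" where
  "basis_matrix e b = (\<chi> r c. b (inv_into {..<CARD('k)} e c) $ r)"

locale index_enum =
  fixes e :: "nat \<Rightarrow> 'k::finite"
  assumes bij: "bij_betw e {..<CARD('k)} (UNIV::'k set)"
begin

abbreviation "ie \<equiv> inv_into {..<CARD('k)} e"

lemma ie_less: "ie c < CARD('k)"
  using bij_betw_imp_surj_on[OF bij] by (metis UNIV_I inv_into_into lessThan_iff)

lemma e_ie: "e (ie c) = c"
  using bij_betw_imp_surj_on[OF bij] by (simp add: f_inv_into_f)

lemma ie_e: "i < CARD('k) \<Longrightarrow> ie (e i) = i"
  by (rule inv_into_f_f[OF bij_betw_imp_inj_on[OF bij]]) simp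

lemma sum_reindex_e: "(\<Sum>c\<in>(UNIV::'k set). f c) = (\<Sum>i<CARD('k). f (e i))"
  using sum.reindex_bij_betw[OF bij, of f] by simp

lemma prod_reindex_e: "(\<Prod>c\<in>(UNIV::'k set). f c) = (\<Prod>i<CARD('k). f (e i))"
  using prod.reindex_bij_betw[OF bij, of f] by simp

lemma basis_matrix_nth: "basis_matrix e b $ r $ c = b (ie c) $ r"
  unfolding basis_matrix_def by simp

lemma transpose_basis_matrix: "transpose (basis_matrix e b) = (\<chi> c. b (ie c))"
  by (simp add: transpose_def basis_matrix_nth vec_eq_iff)

lemma basis_matrix_cong: "(\<And>i. i < CARD('k) \<Longrightarrow> b i = b' i) \<Longrightarrow> basis_matrix e b = basis_matrix e b'"
  unfolding basis_matrix_def using ie_less by (simp add: vec_eq_iff)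

lemma basis_matrix_mult_vec: "basis_matrix e b *v z = (\<Sum>i<CARD('k). (z $ e i) *\<^sub>R b i)"
proof -
  have "(basis_matrix e b *v z) $ r = (\<Sum>i<CARD('k). (z $ e i) *\<^sub>R b i) $ r" for r
  proof -
    have "(basis_matrix e b *v z) $ r = (\<Sum>c\<in>UNIV. b (ie c) $ r * z $ c)"
      by (simp add: matrix_vector_mult_def basis_matrix_nth)
    also have "\<dots> = (\<Sum>i<CARD('k). b i $ r * z $ e i)"
      unfolding sum_reindex_e by (intro sum.cong) (auto simp: ie_e)
    finally show ?thesis by (simp add: sum_component mult.commute)
  qed
  then show ?thesis by (simp add: vec_eq_iff)
qed

lemma lattice_of_basis_matrix: "lattice_of (basis_matrix e b) = int_span CARD('k) b"
proof (intro set_eqI iffI)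
  fix v assume "v \<in> lattice_of (basis_matrix e b)"
  then obtain z where z: "z \<in> int_vectors" "v = basis_matrix e b *v z" unfolding lattice_of_def by auto
  have "v = (\<Sum>i<CARD('k). of_int \<lfloor>z $ e i\<rfloor> *\<^sub>R b i)"
    unfolding z(2) basis_matrix_mult_vec of_int_floor_int_vector[OF z(1)] ..
  then show "v \<in> int_span CARD('k) b" unfolding int_span_def by (auto intro!: exI[of _ "\<lambda>i. \<lfloor>z $ e i\<rfloor>"])
next
  fix v assume "v \<in> int_span CARD('k) b"
  then obtain z where z: "v = (\<Sum>i<CARD('k). of_int (z i) *\<^sub>R b i)" unfolding int_span_def by blast
  define zz :: "real^'k" where "zz = (\<chi> c. of_int (z (ie c)))"
  have "zz \<in> int_vectors" unfolding int_vectors_def zz_def by simp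
  moreover have "basis_matrix e b *v zz = v" unfolding basis_matrix_mult_vec z zz_def
    by (intro sum.cong) (auto simp: ie_e)
  ultimately show "v \<in> lattice_of (basis_matrix e b)" unfolding lattice_of_def by blast
qed

lemma basis_matrix_change_of_basis:
  assumes "\<And>i. i < CARD('k) \<Longrightarrow> b' i \<in> int_span CARD('k) b"
  obtains G where "\<And>i j. G $ i $ j \<in> \<int>" "basis_matrix e b' = basis_matrix e b ** G"
proof -
  have "\<forall>i. \<exists>z. i < CARD('k) \<longrightarrow> b' i = (\<Sum>l<CARD('k). of_int (z l) *\<^sub>R b l)"
    using assms unfolding int_span_def by blast
  then obtain Z where Z: "\<And>i. i < CARD('k) \<Longrightarrow> b' i = (\<Sum>l<CARD('k). of_int (Z i l) *\<^sub>R b l)"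
    by metis
  define G :: "real^'k^'k" where "G = (\<chi> c' c. of_int (Z (ie c) (ie c')))"
  have "(basis_matrix e b ** G) $ r $ c = basis_matrix e b' $ r $ c" for r c
  proof -
    have "(basis_matrix e b ** G) $ r $ c = (\<Sum>c'\<in>UNIV. b (ie c') $ r * of_int (Z (ie c) (ie c')))"
      by (simp add: matrix_matrix_mult_def basis_matrix_nth G_def)
    also have "\<dots> = (\<Sum>l<CARD('k). b l $ r * of_int (Z (ie c) l))"
      unfolding sum_reindex_e by (intro sum.cong) (auto simp: ie_e)
    also have "\<dots> = b' (ie c) $ r" unfolding Z[OF ie_less] by (simp add: sum_component mult.commute)
    finally show ?thesis by (simp add: basis_matrix_nth)
  qed
  then have "basis_matrix e b' = basis_matrix e b ** G" by (simp add: vec_eq_iff)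
  moreover have "G $ i $ j \<in> \<int>" for i j unfolding G_def by simp
  ultimately show ?thesis using that by blast
qed

lemma abs_det_basis_matrix_eq_if_int_span_eq:
  assumes eq: "int_span CARD('k) b' = int_span CARD('k) b" and nz: "det (basis_matrix e b) \<noteq> 0"
  shows "\<bar>det (basis_matrix e b')\<bar> = \<bar>det (basis_matrix e b)\<bar>"
proof -
  obtain G where G: "\<And>i j. G $ i $ j \<in> \<int>" "basis_matrix e b' = basis_matrix e b ** G"
    using basis_matrix_change_of_basis[of b' b] int_span_base[of _ "CARD('k)" b'] eq by blast
  obtain H where H: "\<And>i j. H $ i $ j \<in> \<int>" "basis_matrix e b = basis_matrix e b' ** H"
    using basis_matrix_change_of_basis[of b b'] int_span_base[of _ "CARD('k)" b] eq by blast
  have "det (basis_matrix e b) = det (basis_matrix e b) * (det G * det H)"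
    using G(2) H(2) by (metis det_mul mult.assoc)
  then have GH: "det G * det H = 1" using nz by simp
  have "det G \<in> \<int>" "det H \<in> \<int>" unfolding det_def using G(1) H(1) by (intro Ints_sum Ints_mult Ints_prod; simp)+
  then obtain g h where gh: "det G = of_int g" "det H = of_int h" by (metis Ints_cases)
  then have "g * h = 1" using GH by (metis of_int_eq_1_iff of_int_mult)
  then have "\<bar>det G\<bar> = 1" using gh by (auto simp: zmult_eq_1_iff)
  then show ?thesis using G(2) by (simp add: det_mul abs_mult)
qed

lemma det_basis_matrix_add_span_prefix:
  assumes r: "r < CARD('k)" and v: "v \<in> span (b ` {..<r})"
  shows "det (basis_matrix e (b(r := b r + v))) = det (basis_matrix e b)"
proof -
  define A where "A = transpose (basis_matrix e b)"
  have rowA: "row c A = b (ie c)" for c unfolding A_def transpose_basis_matrix row_def by simp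
  have "b ` {..<r} \<subseteq> {row j A |j. j \<noteq> e r}"
  proof
    fix x assume "x \<in> b ` {..<r}"
    then obtain l where l: "l < r" "x = b l" by auto
    then have "row (e l) A = x" "e l \<noteq> e r" using r rowA ie_e by (metis less_trans, metis less_trans less_irrefl)
    then show "x \<in> {row j A |j. j \<noteq> e r}" by blast
  qed
  then have "v \<in> vec.span {row j A |j. j \<noteq> e r}" using v span_mono span_vec_eq by blast
  moreover have "transpose (basis_matrix e (b(r := b r + v))) = (\<chi> c. if c = e r then row c A + v else row c A)"
    unfolding transpose_basis_matrix rowA using r by (auto simp: vec_eq_iff ie_e e_ie dest: arg_cong[of _ _ e])
  ultimately have "det (transpose (basis_matrix e (b(r := b r + v)))) = det A"
    using det_row_span by (simp cong: if_cong)
  then show ?thesis unfolding A_def by simp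
qed

text \<open>Replace the columns \<open>w r\<close> by \<open>b r\<close> one at a time, for increasing \<open>r\<close>: each step adds to \<open>w r\<close>
  a combination of the columns \<open>b 0, \<dots>, b (r - 1)\<close>, which are already in place.\<close>

lemma det_basis_matrix_unitriangular:
  assumes "\<And>i. i < CARD('k) \<Longrightarrow> b i - w i \<in> span (b ` {..<i})"
  shows "det (basis_matrix e w) = det (basis_matrix e b)"
proof -
  let ?k = "CARD('k)"
  define mix where "mix r i = (if i < r then b i else w i)" for r i
  have step: "det (basis_matrix e (mix r)) = det (basis_matrix e (mix (Suc r)))" if r: "r < ?k" for r
  proof -
    have "mix (Suc r) ` {..<r} = b ` {..<r}" unfolding mix_def by auto
    then have "w r - b r \<in> span (mix (Suc r) ` {..<r})" using assms[OF r] span_neg by fastforce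
    moreover have "mix r = (mix (Suc r))(r := mix (Suc r) r + (w r - b r))"
      unfolding mix_def by (auto simp: fun_eq_iff)
    ultimately show ?thesis using det_basis_matrix_add_span_prefix[OF r] by metis
  qed
  have "det (basis_matrix e (mix (?k - d))) = det (basis_matrix e b)" if "d \<le> ?k" for d
    using that
  proof (induction d)
    case 0
    have "basis_matrix e (mix ?k) = basis_matrix e b" by (rule basis_matrix_cong) (simp add: mix_def)
    then show ?case by simp
  next
    case (Suc d)
    then have "det (basis_matrix e (mix (?k - Suc d))) = det (basis_matrix e (mix (Suc (?k - Suc d))))"
      by (intro step) simp
    also have "Suc (?k - Suc d) = ?k - d" using Suc.prems by simp
    finally show ?case using Suc by simp
  qed
  moreover have "mix 0 = w" unfolding mix_def by auto
  ultimately show ?thesis by (metis cancel_comm_monoid_add_class.diff_cancel order_refl)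
qed

lemma abs_det_basis_matrix_orthogonal:
  assumes orth: "\<And>i j. i < CARD('k) \<Longrightarrow> j < CARD('k) \<Longrightarrow> i \<noteq> j \<Longrightarrow> inner (w i) (w j) = 0"
  shows "\<bar>det (basis_matrix e w)\<bar> = (\<Prod>i<CARD('k). norm (w i))"
proof -
  let ?M = "basis_matrix e w"
  have "inner (w (ie c)) (w (ie c')) = (if c = c' then (norm (w (ie c)))\<^sup>2 else 0)" for c c'
    using orth[OF ie_less ie_less] e_ie by (metis power2_norm_eq_inner)
  then have gram: "transpose ?M ** ?M = (\<chi> c c'. if c = c' then (norm (w (ie c)))\<^sup>2 else 0)"
    by (simp add: vec_eq_iff matrix_matrix_mult_def transpose_def basis_matrix_nth inner_vec_def)
  have "\<bar>det ?M\<bar>\<^sup>2 = det (transpose ?M ** ?M)" by (simp add: det_mul power2_eq_square)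
  also have "\<dots> = (\<Prod>c\<in>UNIV. (norm (w (ie c)))\<^sup>2)" unfolding gram by (subst det_diagonal) auto
  also have "\<dots> = (\<Prod>i<CARD('k). norm (w i))\<^sup>2"
    unfolding prod_reindex_e by (simp add: ie_e prod_power_distrib)
  finally show ?thesis by (rule power2_eq_imp_eq) (auto intro: prod_nonneg)
qed

lemma abs_det_basis_matrix_eq_prod_gs_height:
  "\<bar>det (basis_matrix e b)\<bar> = (\<Prod>i<CARD('k). gs_height b i)"
proof -
  obtain w where w: "\<And>i. b i - w i \<in> span (b ` {..<i})"
    "\<And>i v. v \<in> span (b ` {..<i}) \<Longrightarrow> orthogonal (w i) v"
    using gram_schmidt_exists by metis
  have "\<bar>det (basis_matrix e b)\<bar> = \<bar>det (basis_matrix e w)\<bar>"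
    using det_basis_matrix_unitriangular[of b w] w(1) by simp
  also have "\<dots> = (\<Prod>i<CARD('k). norm (w i))"
    by (rule abs_det_basis_matrix_orthogonal)
      (metis gram_schmidt_orthogonal[OF w] inner_commute linorder_neqE_nat)
  also have "\<dots> = (\<Prod>i<CARD('k). gs_height b i)"
    using gs_height_eq_norm_gram_schmidt[of b _ w] w by simp
  finally show ?thesis .
qed

end

section \<open>Reduction of lattice bases\<close>

lemma gs_height_decomp:
  fixes b :: "nat \<Rightarrow> 'a::euclidean_space"
  obtains y w where "b j = y + w" "y \<in> span (b ` {..<j})"
    "\<And>v. v \<in> span (b ` {..<j}) \<Longrightarrow> orthogonal w v" "gs_height b j = norm w"
proof -
  obtain y w where "y \<in> span (b ` {..<j})" "\<And>v. v \<in> span (b ` {..<j}) \<Longrightarrow> orthogonal w v"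
    "b j = y + w"
    using orthogonal_subspace_decomp_exists[of "b ` {..<j}" "b j"] by metis
  moreover from this have "gs_height b j = norm w"
    unfolding gs_height_def by (intro infdist_span_orthogonal_decomp)
  ultimately show ?thesis using that by blast
qed

text \<open>Subtract from \<open>b (i + 1)\<close> the nearest integer multiple of \<open>b i\<close> and exchange the two: the new
  \<open>i\<close>-th height is at most half the old one plus the old \<open>(i + 1)\<close>-th height.\<close>

lemma lagrange_swap_step:
  fixes b :: "nat \<Rightarrow> 'a::euclidean_space"
  assumes i: "Suc i < n" and small: "gs_height b (Suc i) < gs_height b i / 2"
  obtains b' where "int_span n b' = int_span n b" "\<And>j. j < i \<Longrightarrow> gs_height b' j = gs_height b j"
    "gs_height b' i < gs_height b i" "gs_height b' (Suc i) \<le> gs_height b i"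
    "\<And>j. Suc i < j \<Longrightarrow> gs_height b' j = gs_height b j"
proof -
  define S where "S = b ` {..<i}"
  obtain u w where uw: "b (Suc i) = u + w" "u \<in> span (b ` {..<Suc i})"
    and hw: "gs_height b (Suc i) = norm w" by (rule gs_height_decomp)
  have "b ` {..<Suc i} = insert (b i) S" unfolding S_def by (auto simp: lessThan_Suc)
  then obtain s where s: "u - s *\<^sub>R b i \<in> span S" using uw(2) span_breakdown_eq by metis
  obtain v r where vr: "b i = v + r" "v \<in> span S" and hr: "gs_height b i = norm r"
    unfolding S_def by (rule gs_height_decomp)
  define b' where "b' = b(i := b (Suc i) - of_int (round s) *\<^sub>R b i, Suc i := b i)"
  have S': "b' ` {..<i} = S" unfolding S_def b'_def by auto
  have "gs_height b' i \<le> dist (b' i) ((u - s *\<^sub>R b i) + (s - of_int (round s)) *\<^sub>R v)"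
    unfolding gs_height_def S' by (rule infdist_le) (use s vr(2) in \<open>auto intro: span_add span_scale\<close>)
  also have "\<dots> = norm ((s - of_int (round s)) *\<^sub>R r + w)"
    unfolding dist_norm b'_def using uw(1) vr(1) by (simp add: algebra_simps)
  also have "\<dots> \<le> \<bar>s - of_int (round s)\<bar> * norm r + norm w"
    by (rule order_trans[OF norm_triangle_ineq]) simp
  also have "\<dots> \<le> 1/2 * norm r + norm w"
    using of_int_round_abs_le[of s] by (intro add_right_mono mult_right_mono) (auto simp: abs_minus_commute)
  finally have "gs_height b' i < gs_height b i" using small hw hr by simp
  moreover have "gs_height b' (Suc i) \<le> gs_height b i"
  proof -
    have "span S \<subseteq> span (b' ` {..<Suc i})" unfolding S'[symmetric] by (intro span_mono) auto
    then have "gs_height b' (Suc i) \<le> dist (b' (Suc i)) v"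
      unfolding gs_height_def using vr(2) by (intro infdist_le) auto
    then show ?thesis using vr(1) hr by (simp add: b'_def dist_norm)
  qed
  moreover have "gs_height b' j = gs_height b j" if "Suc i < j" for j
  proof -
    have "span (b' ` {..<j}) = span (b ` {..<j})"
      using that unfolding b'_def by (intro span_prefix_eq_if_int_span_eq int_span_swap_sub)
    then show ?thesis using that unfolding gs_height_def b'_def by simp
  qed
  moreover have "int_span n b' = int_span n b" unfolding b'_def using i by (rule int_span_swap_sub)
  moreover have "gs_height b' j = gs_height b j" if "j < i" for j
    using that unfolding b'_def by (intro gs_height_cong) auto
  ultimately show ?thesis using that by blast
qed

lemma size_reduce_step:
  fixes b :: "nat \<Rightarrow> 'a::euclidean_space"
  assumes r: "r < n"
  obtains b' where "int_span n b' = int_span n b" "\<And>j. gs_height b' j = gs_height b j"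
    "\<And>j. j \<noteq> r \<Longrightarrow> b' j = b j" "norm (b' r) \<le> gs_height b r + (1/2) * (\<Sum>l<r. norm (b l))"
proof -
  obtain y w where yw: "b r = y + w" "y \<in> span (b ` {..<r})" and hw: "gs_height b r = norm w"
    by (rule gs_height_decomp)
  obtain x where x: "y = (\<Sum>l<r. x l *\<^sub>R b l)" using span_prefix_obtain_coeffs[OF yw(2)] by blast
  define c where "c = (\<Sum>l<r. of_int (round (x l)) *\<^sub>R b l)"
  define b' where "b' = b(r := b r - c)"
  have c: "c \<in> int_span r b" unfolding c_def by (intro int_span_sum int_span_base)
  have int_span_b': "int_span j b' = int_span j b" if "r < j" for j
    unfolding b'_def using that c by (rule int_span_update_sub)
  have "span (b' ` {..<j}) = span (b ` {..<j})" for j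
  proof (cases "r < j")
    case True then show ?thesis by (intro span_prefix_eq_if_int_span_eq int_span_b')
  next
    case False then have "b' ` {..<j} = b ` {..<j}" unfolding b'_def by auto
    then show ?thesis by simp
  qed
  moreover have "c \<in> span (b ` {..<r})" unfolding c_def by (intro span_sum span_scale span_base) auto
  ultimately have heights: "gs_height b' j = gs_height b j" for j
    unfolding b'_def using gs_height_translate[of "b(r := b r - c)" r b "- c"]
    by (cases "j = r") (auto simp: gs_height_def span_neg)
  have "b' r = w + (\<Sum>l<r. (x l - of_int (round (x l))) *\<^sub>R b l)"
    unfolding b'_def c_def using yw(1) x by (simp add: scaleR_diff_left sum_subtractf algebra_simps)
  then have "norm (b' r) \<le> norm w + norm (\<Sum>l<r. (x l - of_int (round (x l))) *\<^sub>R b l)"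
    by (simp add: norm_triangle_ineq)
  also have "\<dots> \<le> norm w + (\<Sum>l<r. norm ((x l - of_int (round (x l))) *\<^sub>R b l))"
    using norm_sum by (rule add_left_mono)
  also have "\<dots> \<le> norm w + (\<Sum>l<r. 1/2 * norm (b l))"
  proof (intro add_left_mono sum_mono)
    fix l
    have "\<bar>x l - of_int (round (x l))\<bar> \<le> 1/2"
      using of_int_round_abs_le[of "x l"] by (simp add: abs_minus_commute)
    then have "\<bar>x l - of_int (round (x l))\<bar> * norm (b l) \<le> 1/2 * norm (b l)"
      by (rule mult_right_mono) simp
    then show "norm ((x l - of_int (round (x l))) *\<^sub>R b l) \<le> 1/2 * norm (b l)" by simp
  qed
  finally have "norm (b' r) \<le> gs_height b r + (1/2) * (\<Sum>l<r. norm (b l))"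
    using hw by (simp add: sum_distrib_left)
  moreover have "b' j = b j" if "j \<noteq> r" for j using that unfolding b'_def by simp
  ultimately show ?thesis using that heights int_span_b'[OF r] by blast
qed

lemma size_reduced_basis_exists:
  fixes b :: "nat \<Rightarrow> 'a::euclidean_space"
  obtains b' where "int_span n b' = int_span n b" "\<And>j. gs_height b' j = gs_height b j"
    "\<And>j. j < n \<Longrightarrow> norm (b' j) \<le> gs_height b j + (1/2) * (\<Sum>l<j. norm (b' l))"
proof -
  have "\<exists>b'. int_span n b' = int_span n b \<and> (\<forall>j. gs_height b' j = gs_height b j) \<and>
     (\<forall>j<r. norm (b' j) \<le> gs_height b j + (1/2) * (\<Sum>l<j. norm (b' l)))" if "r \<le> n" for r
    using that
  proof (induction r)
    case 0
    show ?case by (rule exI[of _ b]) simp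
  next
    case (Suc r)
    then obtain b' where b': "int_span n b' = int_span n b" "\<forall>j. gs_height b' j = gs_height b j"
      "\<forall>j<r. norm (b' j) \<le> gs_height b j + (1/2) * (\<Sum>l<j. norm (b' l))" by auto
    obtain b'' where b'': "int_span n b'' = int_span n b'" "\<And>j. gs_height b'' j = gs_height b' j"
      "\<And>j. j \<noteq> r \<Longrightarrow> b'' j = b' j" "norm (b'' r) \<le> gs_height b' r + (1/2) * (\<Sum>l<r. norm (b' l))"
      using size_reduce_step[of r n b'] Suc.prems by auto
    have "(\<Sum>l<j. norm (b'' l)) = (\<Sum>l<j. norm (b' l))" if "j \<le> r" for j
      using that b''(3) by (intro sum.cong) auto
    then have "norm (b'' j) \<le> gs_height b j + (1/2) * (\<Sum>l<j. norm (b'' l))" if "j < Suc r" for j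
      using that b'(2,3) b''(3,4) by (cases "j = r") auto
    then show ?case using b' b'' by (intro exI[of _ b'']) auto
  qed
  then show ?thesis using that by blast
qed

lemma bound_of_half_sum_recurrence:
  fixes f :: "nat \<Rightarrow> real"
  assumes R: "0 \<le> R" and f: "\<And>j. j < n \<Longrightarrow> f j \<le> R + (1/2) * (\<Sum>l<j. f l)"
  shows "j < n \<Longrightarrow> f j \<le> R * 2 ^ n"
proof -
  have sum: "(\<Sum>l<j. f l) \<le> R * (2 ^ j - 1)" if "j \<le> n" for j
    using that
  proof (induction j)
    case (Suc j)
    have "(\<Sum>l<Suc j. f l) \<le> (\<Sum>l<j. f l) + (R + (1/2) * (\<Sum>l<j. f l))"
      using f[of j] Suc.prems by simp
    also have "\<dots> \<le> R * (2 ^ j - 1) * (3/2) + R" using Suc by simp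
    also have "\<dots> = (3/2) * (R * 2 ^ j) - R / 2" by (simp add: algebra_simps)
    also have "\<dots> \<le> 2 * (R * 2 ^ j) - R" using R mult_left_mono[of 1 "2 ^ j" R] by simp
    also have "\<dots> = R * (2 ^ Suc j - 1)" by (simp add: algebra_simps)
    finally show ?case .
  qed simp
  assume j: "j < n"
  have "f j \<le> R + (1/2) * (R * (2 ^ j - 1))" using f[OF j] sum[of j] j by simp
  also have "\<dots> \<le> R * 2 ^ j" using R mult_left_mono[of 1 "2 ^ j" R] by (simp add: algebra_simps)
  also have "\<dots> \<le> R * 2 ^ n" using R j by (intro mult_left_mono) auto
  finally show ?thesis .
qed

lemma finite_int_vectors_ball: "finite {z::real^'k::finite. z \<in> int_vectors \<and> norm z \<le> B}"
proof -
  let ?N = "\<lceil>B\<rceil>"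
  have "{z::real^'k. z \<in> int_vectors \<and> norm z \<le> B} \<subseteq> (\<lambda>f. \<chi> i. of_int (f i)) ` PiE UNIV (\<lambda>_. {-?N..?N})"
  proof
    fix z :: "real^'k" assume z: "z \<in> {z. z \<in> int_vectors \<and> norm z \<le> B}"
    then have zi: "of_int \<lfloor>z $ i\<rfloor> = z $ i" for i using of_int_floor_int_vector by blast
    have zB: "\<bar>real_of_int \<lfloor>z $ i\<rfloor>\<bar> \<le> B" for i
      using z component_le_norm_cart[of z i] unfolding zi by simp
    have "\<lfloor>z $ i\<rfloor> \<in> {-?N..?N}" for i
    proof -
      have "\<bar>real_of_int \<lfloor>z $ i\<rfloor>\<bar> \<le> of_int ?N" using zB[of i] le_of_int_ceiling[of B] by linarith
      then have "\<bar>\<lfloor>z $ i\<rfloor>\<bar> \<le> ?N" by (metis of_int_abs of_int_le_iff)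
      then show ?thesis by (simp add: abs_le_iff)
    qed
    then have "(\<lambda>i. \<lfloor>z $ i\<rfloor>) \<in> PiE UNIV (\<lambda>_. {-?N..?N})" by (auto simp: PiE_UNIV_domain)
    moreover have "z = (\<chi> i. of_int \<lfloor>z $ i\<rfloor>)" unfolding zi by simp
    ultimately show "z \<in> (\<lambda>f. \<chi> i. of_int (f i)) ` PiE UNIV (\<lambda>_. {-?N..?N})" by (intro image_eqI[where x="\<lambda>i. \<lfloor>z $ i\<rfloor>"])
  qed
  then show ?thesis by (rule finite_subset) (intro finite_imageI finite_PiE; simp)
qed

lemma finite_lattice_ball:
  fixes g :: "real^'k::finite^'k"
  assumes "det g \<noteq> 0"
  shows "finite {v \<in> lattice_of g. norm v \<le> B}"
proof -
  obtain gi where gi: "gi ** g = mat 1" using assms invertible_det_nz unfolding invertible_def by blast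
  obtain K where K: "\<And>x. norm (gi *v x) \<le> norm x * K" "K > 0"
    using bounded_linear.pos_bounded[OF matrix_vector_mul_bounded_linear[of gi]] by blast
  have "{v \<in> lattice_of g. norm v \<le> B} \<subseteq> (\<lambda>z. g *v z) ` {z. z \<in> int_vectors \<and> norm z \<le> B * K}"
  proof
    fix v assume v: "v \<in> {v \<in> lattice_of g. norm v \<le> B}"
    then obtain z where z: "z \<in> int_vectors" "v = g *v z" unfolding lattice_of_def by auto
    have "z = gi *v v" unfolding z(2) by (simp add: matrix_vector_mul_assoc gi)
    then have "norm z \<le> norm v * K" using K(1) by simp
    also have "\<dots> \<le> B * K" using v K(2) by (intro mult_right_mono) auto
    finally show "v \<in> (\<lambda>z. g *v z) ` {z. z \<in> int_vectors \<and> norm z \<le> B * K}" using z by blast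
  qed
  then show ?thesis by (rule finite_subset) (intro finite_imageI finite_int_vectors_ball)
qed

definition height_profile :: "nat \<Rightarrow> (nat \<Rightarrow> 'a::euclidean_space) \<Rightarrow> nat \<Rightarrow> real" where
  "height_profile k b i = (if i < k then gs_height b i else 0)"

definition lex_less :: "nat \<Rightarrow> (nat \<Rightarrow> real) \<Rightarrow> (nat \<Rightarrow> real) \<Rightarrow> bool" where
  "lex_less k x y \<longleftrightarrow> (\<exists>i<k. (\<forall>j<i. x j = y j) \<and> x i < y i)"

lemma lex_less_trans: "lex_less k x y \<Longrightarrow> lex_less k y z \<Longrightarrow> lex_less k x z"
proof -
  assume "lex_less k x y" "lex_less k y z"
  then obtain i1 i2 where "i1 < k" "\<forall>j<i1. x j = y j" "x i1 < y i1"
    and "i2 < k" "\<forall>j<i2. y j = z j" "y i2 < z i2" unfolding lex_less_def by blast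
  then show "lex_less k x z" unfolding lex_less_def
    by (cases i1 i2 rule: linorder_cases) (auto intro!: exI[of _ "min i1 i2"])
qed

lemma lex_less_irrefl: "\<not> lex_less k x x"
  unfolding lex_less_def by auto

lemma lex_less_minimal_exists:
  assumes "finite A" "x \<in> A"
  obtains H where "H \<in> A" "\<And>y. y \<in> A \<Longrightarrow> \<not> lex_less k y H"
proof -
  have "wf {(x, y). x \<in> A \<and> y \<in> A \<and> lex_less k x y}"
  proof (rule finite_acyclic_wf)
    show "finite {(x, y). x \<in> A \<and> y \<in> A \<and> lex_less k x y}"
      using assms(1) by (intro finite_subset[OF _ finite_cartesian_product[of A A]]) auto
    have "trans {(x, y). x \<in> A \<and> y \<in> A \<and> lex_less k x y}"
      unfolding trans_def using lex_less_trans by blast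
    then show "acyclic {(x, y). x \<in> A \<and> y \<in> A \<and> lex_less k x y}"
      by (simp add: acyclic_irrefl irrefl_def lex_less_irrefl)
  qed
  then obtain H where "H \<in> A" "\<And>y. (y, H) \<in> {(x, y). x \<in> A \<and> y \<in> A \<and> lex_less k x y} \<Longrightarrow> y \<notin> A"
    using wfE_min[of _ x A] assms(2) by blast
  then show ?thesis using that by blast
qed

context index_enum
begin

lemma finite_bounded_height_profiles:
  assumes nz: "det (basis_matrix e b0) \<noteq> 0" and R: "0 \<le> R"
  shows "finite {height_profile CARD('k) b | b.
    int_span CARD('k) b = int_span CARD('k) b0 \<and> (\<forall>i<CARD('k). gs_height b i \<le> R)}"
    (is "finite ?A")
proof -
  let ?k = "CARD('k)"
  define F where "F = {v \<in> lattice_of (basis_matrix e b0). norm v \<le> R * 2 ^ ?k}"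
  have "?A \<subseteq> height_profile ?k ` PiE {..<?k} (\<lambda>_. F)"
  proof
    fix H assume "H \<in> ?A"
    then obtain b where b: "H = height_profile ?k b" "int_span ?k b = int_span ?k b0"
      "\<forall>i<?k. gs_height b i \<le> R" by blast
    obtain b' where b': "int_span ?k b' = int_span ?k b" "\<And>j. gs_height b' j = gs_height b j"
      "\<And>j. j < ?k \<Longrightarrow> norm (b' j) \<le> gs_height b j + (1/2) * (\<Sum>l<j. norm (b' l))"
      using size_reduced_basis_exists[of ?k b] by blast
    have "b' j \<in> F" if "j < ?k" for j
    proof -
      have "norm (b' j) \<le> R * 2 ^ ?k"
        using that b(3) b'(3) by (intro bound_of_half_sum_recurrence[OF R]) (fastforce+)
      moreover have "b' j \<in> lattice_of (basis_matrix e b0)"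
        using int_span_base[OF that, of b'] b'(1) b(2) by (simp add: lattice_of_basis_matrix)
      ultimately show ?thesis unfolding F_def by simp
    qed
    then have "restrict b' {..<?k} \<in> PiE {..<?k} (\<lambda>_. F)" by auto
    moreover have "gs_height (restrict b' {..<?k}) i = gs_height b i" if "i < ?k" for i
      using that b'(2) by (subst gs_height_cong[of i _ b']) auto
    then have "height_profile ?k (restrict b' {..<?k}) = H" unfolding b(1) height_profile_def by auto
    ultimately show "H \<in> height_profile ?k ` PiE {..<?k} (\<lambda>_. F)" by blast
  qed
  moreover have "finite F" unfolding F_def by (rule finite_lattice_ball[OF nz])
  then have "finite (height_profile ?k ` PiE {..<?k} (\<lambda>_. F))" by (intro finite_imageI finite_PiE) auto
  ultimately show ?thesis by (rule finite_subset)
qed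

text \<open>Among the bases whose heights are all bounded by the sum of the heights of \<open>b\<^sub>0\<close>, take one
  with lexicographically least height profile: a violation of the reduction condition at \<open>i\<close>
  would be repaired by \<open>lagrange_swap_step\<close>, which lowers the profile.\<close>

lemma reduced_basis_exists:
  assumes nz: "det (basis_matrix e b0) \<noteq> 0"
  obtains b where "int_span CARD('k) b = int_span CARD('k) b0"
    "\<And>i. Suc i < CARD('k) \<Longrightarrow> gs_height b i \<le> 2 * gs_height b (Suc i)"
proof -
  let ?k = "CARD('k)"
  define R where "R = (\<Sum>i<?k. gs_height b0 i)"
  have R: "0 \<le> R" unfolding R_def by (intro sum_nonneg gs_height_nonneg)
  define A where "A = {height_profile ?k b | b. int_span ?k b = int_span ?k b0 \<and> (\<forall>i<?k. gs_height b i \<le> R)}"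
  have "height_profile ?k b0 \<in> A"
    unfolding A_def R_def by (auto intro!: member_le_sum gs_height_nonneg)
  moreover have "finite A" unfolding A_def by (rule finite_bounded_height_profiles[OF nz R])
  ultimately obtain H where "H \<in> A" and H: "\<And>y. y \<in> A \<Longrightarrow> \<not> lex_less ?k y H"
    using lex_less_minimal_exists by blast
  then obtain b where b: "H = height_profile ?k b" "int_span ?k b = int_span ?k b0" "\<forall>i<?k. gs_height b i \<le> R"
    unfolding A_def by blast
  have "gs_height b i \<le> 2 * gs_height b (Suc i)" if i: "Suc i < ?k" for i
  proof (rule ccontr)
    assume "\<not> gs_height b i \<le> 2 * gs_height b (Suc i)"
    then have small: "gs_height b (Suc i) < gs_height b i / 2" by simp
    obtain b' where b': "int_span ?k b' = int_span ?k b" "\<And>j. j < i \<Longrightarrow> gs_height b' j = gs_height b j"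
      "gs_height b' i < gs_height b i" "gs_height b' (Suc i) \<le> gs_height b i"
      "\<And>j. Suc i < j \<Longrightarrow> gs_height b' j = gs_height b j"
      using lagrange_swap_step[OF i small] by blast
    have bi: "gs_height b i \<le> R" using b(3) i by simp
    have "gs_height b' j \<le> R" if "j < ?k" for j
    proof (cases "j < i \<or> Suc i < j")
      case True then show ?thesis using b(3) b'(2,5) that by auto
    next
      case False then have "j = i \<or> j = Suc i" by auto
      then show ?thesis using b'(3,4) bi by auto
    qed
    then have "height_profile ?k b' \<in> A" unfolding A_def using b'(1) b(2) by blast
    moreover have "lex_less ?k (height_profile ?k b') H"
      unfolding lex_less_def b(1) height_profile_def using i b'(2,3) by (intro exI[of _ i]) auto
    ultimately show False using H by blast
  qed
  with b(2) show ?thesis by (rule that)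
qed

end

section \<open>Mahler's compactness criterion\<close>

lemma reduced_heights_bounded:
  fixes h :: "nat \<Rightarrow> real"
  assumes reduced: "\<And>i. Suc i < k \<Longrightarrow> h i \<le> 2 * h (Suc i)" and prod: "(\<Prod>i<k. h i) = 1"
    and first: "c \<le> h 0" and c: "0 < c" and nonneg: "\<And>i. 0 \<le> h i" and i: "i < k"
  shows "h i \<le> (2 ^ k / min c 1) ^ k"
proof -
  define m where "m = min c 1 / 2 ^ k"
  have "min c 1 \<le> 2 ^ k" using one_le_power[of "2::real" k] min.cobounded2[of c 1] by linarith
  then have m: "0 < m" "m \<le> 1" unfolding m_def using c by auto
  have "min c 1 / 2 ^ j \<le> h j" if "j < k" for j
    using that
  proof (induction j)
    case (Suc j)
    have "min c 1 / 2 ^ Suc j \<le> h j / 2" using Suc by simp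
    also have "\<dots> \<le> h (Suc j)" using reduced[OF Suc.prems] by simp
    finally show ?case .
  qed (use first in simp)
  moreover have "m \<le> min c 1 / 2 ^ j" if "j < k" for j
    unfolding m_def using c that by (intro divide_left_mono power_increasing) auto
  ultimately have low: "m \<le> h j" if "j < k" for j using that by (meson order_trans)
  have "m ^ k \<le> m ^ (k - 1)" using m by (intro power_decreasing) auto
  also have "m ^ (k - 1) = (\<Prod>j\<in>{..<k} - {i}. m)" using i by simp
  also have "\<dots> \<le> (\<Prod>j\<in>{..<k} - {i}. h j)" using low m by (intro prod_mono) auto
  finally have "h i * m ^ k \<le> h i * (\<Prod>j\<in>{..<k} - {i}. h j)" using nonneg by (rule mult_left_mono)
  also have "\<dots> = 1" using prod prod.remove[of "{..<k}" i h] i by simp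
  finally have "h i \<le> 1 / m ^ k" using m by (simp add: pos_le_divide_eq)
  also have "1 / m ^ k = (2 ^ k / min c 1) ^ k" unfolding m_def by (simp add: power_divide)
  finally show ?thesis .
qed

lemma int_span_negate: "r < n \<Longrightarrow> int_span n (b(r := - b r)) = int_span n b"
  by (rule int_span_eqI) (metis fun_upd_apply int_span_base int_span_neg minus_minus)+

context index_enum
begin

lemma det_basis_matrix_negate:
  fixes b :: "nat \<Rightarrow> real^'k"
  assumes "r < CARD('k)"
  shows "det (basis_matrix e (b(r := - b r))) = - det (basis_matrix e b)"
proof -
  define A where "A = transpose (basis_matrix e b)"
  have "transpose (basis_matrix e (b(r := - b r))) = (\<chi> c. if c = e r then (-1) *s row c A else row c A)"
    unfolding A_def transpose_basis_matrix row_def using assms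
    by (auto simp: vec_eq_iff ie_e e_ie dest: arg_cong[of _ _ e])
  then have "det (transpose (basis_matrix e (b(r := - b r)))) = - det (\<chi> c. row c A)"
    by (simp add: det_row_mul)
  then show ?thesis unfolding A_def by (simp add: row_def vec_lambda_eta)
qed

lemma short_basis_exists:
  fixes g :: "real^'k^'k"
  assumes dg: "\<bar>det g\<bar> = 1" and c: "0 < c" and lg: "\<And>v. v \<in> lattice_of g \<Longrightarrow> v \<noteq> 0 \<Longrightarrow> c \<le> norm v"
  obtains b where "int_span CARD('k) b = lattice_of g" "\<bar>det (basis_matrix e b)\<bar> = 1"
    "\<And>j. j < CARD('k) \<Longrightarrow> norm (b j) \<le> (2 ^ CARD('k) / min c 1) ^ CARD('k) * 2 ^ CARD('k)"
proof -
  let ?k = "CARD('k)"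
  define C1 where "C1 = (2 ^ ?k / min c 1) ^ ?k"
  define b0 where "b0 i = (\<chi> r. g $ r $ e i)" for i
  have g: "basis_matrix e b0 = g" unfolding b0_def by (simp add: vec_eq_iff basis_matrix_nth e_ie)
  then have nz: "det (basis_matrix e b0) \<noteq> 0" using dg by auto
  obtain b where b: "int_span ?k b = int_span ?k b0" "\<And>i. Suc i < ?k \<Longrightarrow> gs_height b i \<le> 2 * gs_height b (Suc i)"
    using reduced_basis_exists[OF nz] by blast
  have lat: "int_span ?k b = lattice_of g" using b(1) g lattice_of_basis_matrix[of b0] by simp
  have det1: "\<bar>det (basis_matrix e b)\<bar> = 1" using abs_det_basis_matrix_eq_if_int_span_eq[OF b(1) nz] g dg by simp
  then have prod1: "(\<Prod>i<?k. gs_height b i) = 1" by (simp add: abs_det_basis_matrix_eq_prod_gs_height)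
  have "b 0 \<noteq> 0"
  proof
    assume "b 0 = 0"
    then have "(\<Prod>i<?k. gs_height b i) = 0" by (intro prod_zero bexI[of _ 0]) (auto simp: gs_height_0)
    then show False using prod1 by simp
  qed
  moreover have "b 0 \<in> lattice_of g" using int_span_base[of 0 ?k b] lat by simp
  ultimately have first: "c \<le> gs_height b 0" using lg by (simp add: gs_height_0)
  have heights: "gs_height b j \<le> C1" if "j < ?k" for j
    unfolding C1_def by (rule reduced_heights_bounded[OF b(2) prod1 first c gs_height_nonneg that])
  obtain b' where b': "int_span ?k b' = int_span ?k b" "\<And>j. gs_height b' j = gs_height b j"
    "\<And>j. j < ?k \<Longrightarrow> norm (b' j) \<le> gs_height b j + (1/2) * (\<Sum>l<j. norm (b' l))"
    using size_reduced_basis_exists[of ?k b] by blast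
  have "C1 \<ge> 0" using heights[of 0] gs_height_nonneg[of b 0] by simp
  then have "norm (b' j) \<le> C1 * 2 ^ ?k" if "j < ?k" for j
    using that b'(3) heights by (intro bound_of_half_sum_recurrence) fastforce+
  moreover have "\<bar>det (basis_matrix e b')\<bar> = 1"
    using abs_det_basis_matrix_eq_if_int_span_eq[OF b'(1)] det1 by simp
  ultimately show ?thesis using that b'(1) lat unfolding C1_def by simp
qed

lemma unimodular_short_representative:
  fixes g :: "real^'k^'k"
  assumes "\<bar>det g\<bar> = 1" "0 < c" "\<And>v. v \<in> lattice_of g \<Longrightarrow> v \<noteq> 0 \<Longrightarrow> c \<le> norm v"
  obtains h where "det h = 1" "\<And>i j. \<bar>h $ i $ j\<bar> \<le> (2 ^ CARD('k) / min c 1) ^ CARD('k) * 2 ^ CARD('k)"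
    "lattice_of h = lattice_of g"
proof -
  let ?C = "(2 ^ CARD('k) / min c 1) ^ CARD('k) * 2 ^ CARD('k)"
  obtain b where b: "int_span CARD('k) b = lattice_of g" "\<bar>det (basis_matrix e b)\<bar> = 1"
    "\<And>j. j < CARD('k) \<Longrightarrow> norm (b j) \<le> ?C"
    using short_basis_exists[OF assms] by blast
  define b' where "b' = (if det (basis_matrix e b) = 1 then b else b(0 := - b 0))"
  have "det (basis_matrix e b') = 1" using b(2) det_basis_matrix_negate[of 0 b] unfolding b'_def by auto
  moreover have "lattice_of (basis_matrix e b') = lattice_of g"
    unfolding lattice_of_basis_matrix b'_def using b(1) int_span_negate[of 0 "CARD('k)" b] by simp
  moreover have "\<bar>basis_matrix e b' $ i $ j\<bar> \<le> ?C" for i j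
  proof -
    have "\<bar>basis_matrix e b' $ i $ j\<bar> \<le> norm (b' (ie j))"
      unfolding basis_matrix_nth by (rule component_le_norm_cart)
    also have "\<dots> = norm (b (ie j))" unfolding b'_def by (auto simp: norm_minus_cancel)
    also have "\<dots> \<le> ?C" using b(3)[OF ie_less] .
    finally show ?thesis .
  qed
  ultimately show ?thesis using that by blast
qed

end

theorem mahler_unimodular_representative:
  fixes g :: "real^'k::finite^'k"
  assumes "\<bar>det g\<bar> = 1" "0 < c" "\<And>v. v \<in> lattice_of g \<Longrightarrow> v \<noteq> 0 \<Longrightarrow> c \<le> norm v"
  obtains h where "det h = 1" "\<And>i j. \<bar>h $ i $ j\<bar> \<le> (2 ^ CARD('k) / min c 1) ^ CARD('k) * 2 ^ CARD('k)"
    "lattice_of h = lattice_of g"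
proof -
  obtain e :: "nat \<Rightarrow> 'k" where "bij_betw e {0..<CARD('k)} UNIV"
    using ex_bij_betw_nat_finite[of "UNIV::'k set"] by auto
  then interpret index_enum e by unfold_locales (simp add: lessThan_atLeast0)
  show ?thesis using unimodular_short_representative[OF assms] that by blast
qed

lemma continuous_on_det: "continuous_on S (det :: real^'k::finite^'k \<Rightarrow> real)"
  unfolding det_def[abs_def] by (intro continuous_intros)

lemma compact_unimodular_bounded_entries:
  "compact {h::real^'k::finite^'k. det h = 1 \<and> (\<forall>i j. \<bar>h $ i $ j\<bar> \<le> C)}" (is "compact ?K")
proof -
  have "?K = {h. det h = 1} \<inter> (\<Inter>i. \<Inter>j. {h. \<bar>h $ i $ j\<bar> \<le> C})" by auto
  moreover have "closed {h::real^'k^'k. det h = 1}"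
    by (rule closed_Collect_eq[OF continuous_on_det]) (intro continuous_intros)
  moreover have "closed {h::real^'k^'k. \<bar>h $ i $ j\<bar> \<le> C}" for i j
    by (rule closed_Collect_le) (intro continuous_intros)+
  ultimately have "closed ?K" by (auto intro!: closed_Inter closed_Int)
  moreover have "norm h \<le> (\<Sum>i\<in>(UNIV::'k set). \<Sum>j\<in>(UNIV::'k set). C)" if "h \<in> ?K" for h
  proof -
    have "norm h \<le> (\<Sum>i\<in>UNIV. norm (h $ i))" unfolding norm_vec_def by (rule L2_set_le_sum) simp
    also have "\<dots> \<le> (\<Sum>i\<in>UNIV. \<Sum>j\<in>UNIV. \<bar>h $ i $ j\<bar>)" by (intro sum_mono norm_le_l1_cart)
    also have "\<dots> \<le> (\<Sum>i\<in>(UNIV::'k set). \<Sum>j\<in>(UNIV::'k set). C)" using that by (intro sum_mono) auto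
    finally show ?thesis .
  qed
  then have "bounded ?K" unfolding bounded_iff by blast
  ultimately show ?thesis by (simp add: compact_eq_bounded_closed)
qed

text \<open>By compactness, \<open>|h u|\<close> has a positive minimum over \<open>h \<in> K\<close> and unit vectors \<open>u\<close>, and a nonzero
  integer vector has norm at least \<open>1\<close>.\<close>

lemma compact_lattices_min_norm_pos:
  fixes K :: "(real^'k::finite^'k) set"
  assumes K: "compact K" "\<forall>g\<in>K. det g = 1"
  obtains \<mu> where "\<mu> > 0" "\<And>g v. g \<in> K \<Longrightarrow> v \<in> lattice_of g \<Longrightarrow> v \<noteq> 0 \<Longrightarrow> \<mu> \<le> norm v"
proof (cases "K = {}")
  case True then show ?thesis using that[of 1] by auto
next
  case False
  define S where "S = K \<times> sphere (0::real^'k) 1"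
  have "sphere (0::real^'k) 1 \<noteq> {}" using vector_choose_size[of 1] by (auto simp: sphere_def)
  then have ne: "S \<noteq> {}" unfolding S_def using False by auto
  have "compact S" unfolding S_def using K(1) compact_sphere by (rule compact_Times)
  moreover have "continuous_on S (\<lambda>x. norm (fst x *v snd x))"
    unfolding matrix_vector_mult_def by (intro continuous_intros)
  ultimately obtain x0 where x0: "x0 \<in> S" "\<And>y. y \<in> S \<Longrightarrow> norm (fst x0 *v snd x0) \<le> norm (fst y *v snd y)"
    using continuous_attains_inf[OF _ ne] by blast
  define \<mu> where "\<mu> = norm (fst x0 *v snd x0)"
  have inj: "u = 0" if g: "g \<in> K" and gu: "g *v u = 0" for g u
  proof -
    have "det g \<noteq> 0" using K(2) g by simp
    then obtain gi where "gi ** g = mat 1" using invertible_det_nz unfolding invertible_def by blast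
    then have "u = gi *v (g *v u)" by (simp add: matrix_vector_mul_assoc)
    then show ?thesis using gu by simp
  qed
  have "fst x0 \<in> K" "snd x0 \<noteq> 0" using x0(1) unfolding S_def by auto
  then have "fst x0 *v snd x0 \<noteq> 0" using inj by blast
  then have "\<mu> > 0" unfolding \<mu>_def by simp
  moreover have "\<mu> \<le> norm v" if g: "g \<in> K" and v: "v \<in> lattice_of g" "v \<noteq> 0" for g v
  proof -
    obtain z where z: "z \<in> int_vectors" "v = g *v z" using v(1) unfolding lattice_of_def by auto
    then have "z \<noteq> 0" using v(2) by auto
    then obtain c where c: "z $ c \<noteq> 0" by (metis vec_eq_iff zero_index)
    obtain n where "z $ c = of_int n" using z(1) unfolding int_vectors_def by (metis Ints_cases mem_Collect_eq)
    with c have "1 \<le> \<bar>z $ c\<bar>" by simp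
    then have nz1: "1 \<le> norm z" using component_le_norm_cart[of z c] by linarith
    define u where "u = (1 / norm z) *\<^sub>R z"
    have "u \<in> sphere 0 1" unfolding u_def using \<open>z \<noteq> 0\<close> by simp
    then have "\<mu> \<le> norm (g *v u)" unfolding \<mu>_def using x0(2)[of "(g, u)"] g unfolding S_def by simp
    also have "\<dots> \<le> norm z * norm (g *v u)" using nz1 by (simp add: mult_le_cancel_right1)
    also have "\<dots> = norm v" unfolding z(2) u_def using \<open>z \<noteq> 0\<close> by (simp add: matrix_vector_mult_scaleR)
    finally show ?thesis .
  qed
  ultimately show ?thesis using that by blast
qed

section \<open>The orbit of \<open>x\<^sub>Y\<close>\<close>

definition unipotent_matrix :: "real^'n::finite^'m::finite \<Rightarrow> real^('m + 'n)^('m + 'n)" where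
  "unipotent_matrix Y = (\<chi> r c. case r of
      Inl i \<Rightarrow> (case c of Inl i' \<Rightarrow> (if i = i' then 1 else 0) | Inr j \<Rightarrow> Y $ i $ j)
    | Inr j \<Rightarrow> (case c of Inl _ \<Rightarrow> 0 | Inr j' \<Rightarrow> (if j = j' then 1 else 0)))"

lemma unipotent_matrix_mult_vec:
  "(unipotent_matrix Y *v z) $ Inl i = z $ Inl i + (\<Sum>j\<in>UNIV. Y $ i $ j * z $ Inr j)"
  "(unipotent_matrix Y *v z) $ Inr j = z $ Inr j"
  by (simp_all add: matrix_vector_mult_def unipotent_matrix_def sum_UNIV_Plus
      if_distrib[of "\<lambda>x. x * _"] cong: if_cong)

lemma lattice_xY_eq_lattice_of:
  fixes Y :: "real^'n::finite^'m::finite"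
  shows "lattice_xY Y = lattice_of (unipotent_matrix Y)"
proof -
  have "(\<lambda>z. unipotent_matrix Y *v z) ` int_vectors = lattice_xY Y"
  proof (intro set_eqI iffI)
    fix v assume "v \<in> (\<lambda>z. unipotent_matrix Y *v z) ` int_vectors"
    then obtain z where z: "z \<in> int_vectors" "v = unipotent_matrix Y *v z" by auto
    define p where "p i = \<lfloor>z $ Inl i\<rfloor>" for i
    define q where "q j = \<lfloor>z $ Inr j\<rfloor>" for j
    have "z $ Inl i = of_int (p i)" "z $ Inr j = of_int (q j)" for i j
      unfolding p_def q_def of_int_floor_int_vector[OF z(1)] by simp_all
    then have "v $ k = xY_point Y p q $ k" for k
      unfolding z(2) by (cases k) (simp_all add: unipotent_matrix_mult_vec)
    then have "v = xY_point Y p q" by (simp add: vec_eq_iff)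
    then show "v \<in> lattice_xY Y" using mem_lattice_xY_iff by blast
  next
    fix v assume "v \<in> lattice_xY Y"
    then obtain p q where v: "v = xY_point Y p q" using mem_lattice_xY_iff by blast
    define z :: "real^('m + 'n)" where "z = (\<chi> k. case k of Inl i \<Rightarrow> of_int (p i) | Inr j \<Rightarrow> of_int (q j))"
    have "z \<in> int_vectors" unfolding int_vectors_def z_def by (auto split: sum.split)
    moreover have "(unipotent_matrix Y *v z) $ k = v $ k" for k
      by (cases k) (simp_all add: unipotent_matrix_mult_vec v z_def)
    then have "unipotent_matrix Y *v z = v" by (simp add: vec_eq_iff)
    ultimately show "v \<in> (\<lambda>z. unipotent_matrix Y *v z) ` int_vectors" by blast
  qed
  then show ?thesis unfolding lattice_of_def by simp
qed

text \<open>Only the identity permutation avoids the zero entries: it must fix every \<open>Inr j\<close>, hence map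
  the \<open>Inl\<close>-indices to themselves, where the matrix is the identity.\<close>

lemma det_unipotent_matrix: "det (unipotent_matrix Y) = 1"
proof -
  let ?U = "unipotent_matrix Y"
  have zero: "(\<Prod>r\<in>UNIV. ?U $ r $ p r) = 0" if p: "p permutes UNIV" "p \<noteq> id" for p
  proof (rule ccontr)
    assume "(\<Prod>r\<in>UNIV. ?U $ r $ p r) \<noteq> 0"
    then have nz: "?U $ r $ p r \<noteq> 0" for r by auto
    have pr: "p (Inr j) = Inr j" for j
      using nz[of "Inr j"] by (cases "p (Inr j)") (auto simp: unipotent_matrix_def split: if_splits)
    have pl: "p (Inl i) = Inl i" for i
    proof (cases "p (Inl i)")
      case (Inl i') then show ?thesis using nz[of "Inl i"] by (auto simp: unipotent_matrix_def split: if_splits)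
    next
      case (Inr j) then show ?thesis using pr[of j] injD[OF permutes_inj[OF p(1)], of "Inl i" "Inr j"] by simp
    qed
    have "p x = x" for x by (cases x) (simp_all add: pl pr)
    then have "p = id" by auto
    then show False using p(2) by simp
  qed
  have "det ?U = (\<Sum>p\<in>{id}. of_int (sign p) * (\<Prod>r\<in>UNIV. ?U $ r $ p r))"
    unfolding det_def by (rule sum.mono_neutral_cong_right) (auto simp: permutes_id finite_permutations zero)
  moreover have "?U $ r $ r = 1" for r by (cases r) (simp_all add: unipotent_matrix_def)
  ultimately show ?thesis by (simp add: sign_id)
qed

lemma exp_act_lattice_xY_eq_lattice_of:
  fixes Y :: "real^'n::finite^'m::finite" and a :: "real^('m + 'n)"
  assumes "a \<in> frak_a"
  obtains g where "det g = 1" "lattice_of g = exp_act a ` lattice_xY Y"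
proof -
  define D :: "real^('m + 'n)^('m + 'n)" where "D = (\<chi> r c. if r = c then exp (a $ r) else 0)"
  have "(D ** unipotent_matrix Y) $ i $ j = exp (a $ i) * unipotent_matrix Y $ i $ j" for i j
    unfolding D_def by (simp add: matrix_matrix_mult_def if_distrib[of "\<lambda>x. x * _"] cong: if_cong)
  then have gv: "(D ** unipotent_matrix Y) *v z = exp_act a (unipotent_matrix Y *v z)" for z
    by (simp add: vec_eq_iff matrix_vector_mult_def sum_distrib_left mult.assoc)
  have "det D = exp (\<Sum>r\<in>UNIV. a $ r)" unfolding D_def by (subst det_diagonal) (auto simp: exp_sum)
  then have "det (D ** unipotent_matrix Y) = 1"
    using assms unfolding frak_a_def by (simp add: det_mul det_unipotent_matrix)
  moreover have "lattice_of (D ** unipotent_matrix Y) = exp_act a ` lattice_xY Y"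
    unfolding lattice_of_def lattice_xY_eq_lattice_of gv by (simp add: image_image)
  ultimately show ?thesis using that by blast
qed

lemma exp_minus_le_supnorm_exp_act:
  fixes a :: "real^('m::finite + 'n::finite)"
  assumes a: "a \<in> C0 t" and w: "w \<in> lattice_xY Y" "w \<noteq> 0"
  shows "exp (- t) \<le> supnorm (exp_act a w)"
proof -
  obtain k where k: "1 \<le> \<bar>w $ k\<bar>" using lattice_xY_nonzero_coordinate[OF w] by blast
  have "0 \<le> t" using C0_D(1,3)[OF a] sum_nonneg[of UNIV "\<lambda>i. a $ Inl i"] by (simp add: less_imp_le)
  have "- t \<le> a $ k"
  proof (cases k)
    case (Inl i) then show ?thesis using C0_D(1)[OF a, of i] \<open>0 \<le> t\<close> by simp
  next
    case (Inr j)
    have "(\<Sum>j'\<in>UNIV - {j}. a $ Inr j') \<le> 0" using C0_D(2)[OF a] by (intro sum_nonpos) (simp add: less_imp_le)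
    then show ?thesis using Inr C0_D(4)[OF a] sum.remove[of UNIV j "\<lambda>j'. a $ Inr j'"] by simp
  qed
  then have "exp (- t) \<le> exp (a $ k)" by simp
  also have "\<dots> \<le> exp (a $ k) * \<bar>w $ k\<bar>" using k by simp
  also have "\<dots> \<le> supnorm (exp_act a w)" using abs_nth_le_supnorm[of "exp_act a w" k] by (simp add: abs_mult)
  finally show ?thesis .
qed

lemma delta_orbit_bounded_below_of_rel_compact:
  fixes Y :: "real^'n::finite^'m::finite"
  assumes "rel_compact_in_X ((\<lambda>a. exp_act a ` lattice_xY Y) ` (E_cone :: (real^('m + 'n)) set))"
  obtains \<epsilon> where "\<epsilon> > 0" "\<And>a. a \<in> (E_cone :: (real^('m + 'n)) set) \<Longrightarrow> \<epsilon> \<le> delta (exp_act a ` lattice_xY Y)"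
proof -
  obtain K where K: "compact K" "\<forall>g\<in>K. det g = 1"
    and orbit: "\<forall>L\<in>(\<lambda>a. exp_act a ` lattice_xY Y) ` (E_cone :: (real^('m + 'n)) set). \<exists>g\<in>K. lattice_of g = L"
    using assms unfolding rel_compact_in_X_def by blast
  obtain \<mu> where \<mu>: "\<mu> > 0" "\<And>g v. g \<in> K \<Longrightarrow> v \<in> lattice_of g \<Longrightarrow> v \<noteq> 0 \<Longrightarrow> \<mu> \<le> norm v"
    using compact_lattices_min_norm_pos[OF K] by blast
  define \<epsilon> where "\<epsilon> = \<mu> / real CARD('m + 'n)"
  have "\<epsilon> \<le> delta (exp_act a ` lattice_xY Y)" if a: "a \<in> E_cone" for a
  proof (rule delta_greatest[OF _ exp_act_lattice_xY_nonzero])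
    fix v assume v: "v \<in> exp_act a ` lattice_xY Y" "v \<noteq> 0"
    obtain g where "g \<in> K" "lattice_of g = exp_act a ` lattice_xY Y" using orbit a by blast
    then have "\<mu> \<le> norm v" using \<mu>(2)[of g v] v by simp
    also have "\<dots> \<le> real CARD('m + 'n) * supnorm v" by (rule norm_le_card_supnorm)
    finally show "\<epsilon> \<le> supnorm v" unfolding \<epsilon>_def by (simp add: divide_le_eq mult.commute supnorm_nonneg)
  qed
  moreover have "0 < real CARD('m + 'n)" by (simp only: of_nat_0_less_iff zero_less_card_finite)
  then have "\<epsilon> > 0" unfolding \<epsilon>_def using \<mu>(1) by simp
  ultimately show ?thesis using that by blast
qed

lemma rel_compact_of_norm_bounded_below:
  fixes Y :: "real^'n::finite^'m::finite"
  assumes c: "0 < c" and bound: "\<And>a v. a \<in> (E_cone :: (real^('m + 'n)) set) \<Longrightarrow>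
    v \<in> exp_act a ` lattice_xY Y \<Longrightarrow> v \<noteq> 0 \<Longrightarrow> c \<le> norm v"
  shows "rel_compact_in_X ((\<lambda>a. exp_act a ` lattice_xY Y) ` (E_cone :: (real^('m + 'n)) set))"
proof -
  define C where "C = (2 ^ CARD('m + 'n) / min c 1) ^ CARD('m + 'n) * 2 ^ CARD('m + 'n)"
  have "\<exists>h. det h = 1 \<and> (\<forall>i j. \<bar>h $ i $ j\<bar> \<le> C) \<and> lattice_of h = exp_act a ` lattice_xY Y"
    if a: "a \<in> E_cone" for a :: "real^('m + 'n)"
  proof -
    have "a \<in> frak_a" using a unfolding E_cone_def by simp
    then obtain g where g: "det g = 1" "lattice_of g = exp_act a ` lattice_xY Y"
      using exp_act_lattice_xY_eq_lattice_of[of a Y] by blast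
    have "\<bar>det g\<bar> = 1" using g(1) by simp
    moreover have "c \<le> norm v" if "v \<in> lattice_of g" "v \<noteq> 0" for v using bound[OF a] that g(2) by simp
    ultimately obtain h where "det h = 1" "\<And>i j. \<bar>h $ i $ j\<bar> \<le> C" "lattice_of h = lattice_of g"
      using mahler_unimodular_representative[of g c] c unfolding C_def by blast
    then show ?thesis using g(2) by auto
  qed
  then show ?thesis unfolding rel_compact_in_X_def
    by (intro exI[of _ "{h. det h = 1 \<and> (\<forall>i j. \<bar>h $ i $ j\<bar> \<le> C)}"])
      (auto simp: compact_unimodular_bounded_entries)
qed

lemma orbit_norm_bounded_below:
  fixes Y :: "real^'n::finite^'m::finite"
  assumes late: "\<And>t a. R \<le> t \<Longrightarrow> 0 \<le> t \<Longrightarrow> a \<in> (C0 t :: (real^('m + 'n)) set) \<Longrightarrow>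
      \<epsilon> \<le> delta (exp_act a ` lattice_xY Y)"
    and a: "a \<in> (E_cone :: (real^('m + 'n)) set)" and v: "v \<in> exp_act a ` lattice_xY Y" "v \<noteq> 0"
  shows "min \<epsilon> (exp (- max R 0)) \<le> norm v"
proof -
  define t where "t = (\<Sum>i\<in>UNIV. a $ Inl i)"
  have aC: "a \<in> C0 t" using a unfolding C0_def t_def by simp
  then have "0 \<le> t" unfolding t_def using C0_D(1)[OF aC] by (simp add: sum_nonneg less_imp_le)
  have "min \<epsilon> (exp (- max R 0)) \<le> supnorm v"
  proof (cases "R \<le> t")
    case True
    then show ?thesis using late[OF True \<open>0 \<le> t\<close> aC] delta_le_supnorm[OF v] by linarith
  next
    case False
    obtain w where w: "w \<in> lattice_xY Y" "v = exp_act a w" using v(1) by blast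
    then have "w \<noteq> 0" using v(2) by (auto simp: exp_act_def vec_eq_iff)
    then have "exp (- t) \<le> supnorm v" using exp_minus_le_supnorm_exp_act[OF aC w(1)] w(2) by simp
    moreover have "exp (- max R 0) \<le> exp (- t)" using False by simp
    ultimately show ?thesis by linarith
  qed
  then show ?thesis using supnorm_le_norm[of v] by linarith
qed

theorem WA_times_iff_orbit_not_rel_compact:
  fixes Y :: "real^'n::finite^'m::finite"
  shows "Y \<in> WA_times \<longleftrightarrow>
    \<not> rel_compact_in_X ((\<lambda>a. exp_act a ` lattice_xY Y) ` (E_cone :: (real^('m + 'n)) set))"
proof
  assume "Y \<in> WA_times"
  then have short: "\<forall>\<epsilon>>0. \<forall>R. \<exists>t\<ge>R. t \<ge> 0 \<and> (\<exists>a\<in>(C0 t :: (real^('m + 'n)) set).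
      delta (exp_act a ` lattice_xY Y) < \<epsilon>)" by (simp add: WA_times_iff_short_orbit_vectors)
  show "\<not> rel_compact_in_X ((\<lambda>a. exp_act a ` lattice_xY Y) ` (E_cone :: (real^('m + 'n)) set))"
  proof
    assume rc: "rel_compact_in_X ((\<lambda>a. exp_act a ` lattice_xY Y) ` (E_cone :: (real^('m + 'n)) set))"
    obtain \<epsilon> where "\<epsilon> > 0" and \<epsilon>: "\<And>a. a \<in> (E_cone :: (real^('m + 'n)) set) \<Longrightarrow>
        \<epsilon> \<le> delta (exp_act a ` lattice_xY Y)"
      using delta_orbit_bounded_below_of_rel_compact[OF rc] by blast
    obtain t and a :: "real^('m + 'n)" where a: "a \<in> C0 t" "delta (exp_act a ` lattice_xY Y) < \<epsilon>"
      using short \<open>\<epsilon> > 0\<close> by blast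
    have "a \<in> E_cone" using a(1) unfolding C0_def by simp
    then show False using \<epsilon> a(2) by (meson not_le)
  qed
next
  assume not_rc: "\<not> rel_compact_in_X ((\<lambda>a. exp_act a ` lattice_xY Y) ` (E_cone :: (real^('m + 'n)) set))"
  show "Y \<in> WA_times"
  proof (rule ccontr)
    assume "Y \<notin> WA_times"
    then obtain \<epsilon> R where "\<epsilon> > 0" and late: "\<And>t a. R \<le> t \<Longrightarrow> 0 \<le> t \<Longrightarrow> a \<in> (C0 t :: (real^('m + 'n)) set) \<Longrightarrow>
        \<epsilon> \<le> delta (exp_act a ` lattice_xY Y)"
      unfolding WA_times_iff_short_orbit_vectors by (auto simp: not_less)
    have "0 < min \<epsilon> (exp (- max R 0))" using \<open>\<epsilon> > 0\<close> by simp
    then have "rel_compact_in_X ((\<lambda>a. exp_act a ` lattice_xY Y) ` (E_cone :: (real^('m + 'n)) set))"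
      by (rule rel_compact_of_norm_bounded_below) (rule orbit_norm_bounded_below[OF late])
    with not_rc show False by contradiction
  qed
qed

theorem mainTheorem12:
  fixes Y :: "real^'n^'m"
  shows "(Y \<in> Sing_times \<longleftrightarrow>
           (\<forall>\<epsilon>>0. \<exists>t0>0. \<forall>t\<ge>t0. \<exists>a\<in>(C0 t :: (real^('m + 'n)) set).
              delta (exp_act a ` lattice_xY Y) < \<epsilon>))
       \<and> (Y \<in> WA_times \<longleftrightarrow>
           (\<forall>\<epsilon>>0. \<forall>R. \<exists>t\<ge>R. t \<ge> 0 \<and> (\<exists>a\<in>(C0 t :: (real^('m + 'n)) set).
              delta (exp_act a ` lattice_xY Y) < \<epsilon>)))
       \<and> (Y \<in> WA_times \<longleftrightarrow>
           \<not> rel_compact_in_X ((\<lambda>a. exp_act a ` lattice_xY Y) ` (E_cone :: (real^('m + 'n)) set)))"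
  using Sing_times_iff_short_orbit_vectors[of Y] WA_times_iff_short_orbit_vectors[of Y]
    WA_times_iff_orbit_not_rel_compact[of Y] by blast

end
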